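(* Let $R$ be a left (respectively right) Noetherian domain and let $A$ be a bijective skew PBW extension of $R$. Then $A$ is a left (respectively right) Ore domain; hence the left (respectively right) division ring of fractions of $A$ exists.
   Context: Rings are associative with identity. Skew PBW extension. Let $R$ and $A$ be rings. $A$ is a skew PBW extension of $R$, written $A=\sigma(R)\langle x_1,\dots,x_n\rangle$, if the following hold. (i) $R\subseteq A$. (ii) There are $x_1,\dots,x_n\in A$ such that $A$ is a free left $R$-module with basis $\{x_1^{\alpha_1}\cdots x_n^{\alpha_n}:\alpha\in\mathbb N^n\}$. (iii) For each $i$ and each $r\in R\setminus\{0\}$ there is $c_{i,r}\in R\setminus\{0\}$ with $x_ir-c_{i,r}x_i\in R$. (iv) For all $i,j$ there is $c_{i,j}\in R\setminus\{0\}$ with $x_jx_i-c_{i,j}x_ix_j\in R+Rx_1+\dots+Rx_n$. There are injective endomorphisms $\sigma_i$ of $R$ and $\sigma_i$-derivations $\delta_i$ with $x_ir=\sigma_i(r)x_i+\delta_i(r)$ for all $r\in R$. $A$ is bijective if all $\sigma_i$ are bijective and all $c_{i,j}$ ($i<j$) are invertible. A domain $D$ is a left Ore domain if for all $a,b\in D$ with $b\neq 0$ there exist $p\neq 0$ and $q$ in $D$ with $pa=qb$. Right Ore domains are defined symmetrically. *)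

theory Defs
  imports Main
begin

text \<open>The ambient ring A is the whole type 'a (class ring_1); R is a subset of it.
  The generators x_1,...,x_n are x 0, ..., x (n-1).\<close>

definition subring_of :: "'a::ring_1 set \<Rightarrow> bool" where
  "subring_of R \<longleftrightarrow> 0 \<in> R \<and> 1 \<in> R \<and> (\<forall>a\<in>R. \<forall>b\<in>R. a + b \<in> R \<and> a - b \<in> R \<and> a * b \<in> R)"

definition domain_on :: "'a::ring_1 set \<Rightarrow> bool" where
  "domain_on D \<longleftrightarrow> (1::'a) \<noteq> 0 \<and> (\<forall>a\<in>D. \<forall>b\<in>D. a * b = 0 \<longrightarrow> a = 0 \<or> b = 0)"

definition left_ideal_of :: "'a::ring_1 set \<Rightarrow> 'a set \<Rightarrow> bool" where
  "left_ideal_of R I \<longleftrightarrow> I \<subseteq> R \<and> 0 \<in> I \<and> (\<forall>a\<in>I. \<forall>b\<in>I. a + b \<in> I)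
     \<and> (\<forall>r\<in>R. \<forall>a\<in>I. r * a \<in> I)"

definition right_ideal_of :: "'a::ring_1 set \<Rightarrow> 'a set \<Rightarrow> bool" where
  "right_ideal_of R I \<longleftrightarrow> I \<subseteq> R \<and> 0 \<in> I \<and> (\<forall>a\<in>I. \<forall>b\<in>I. a + b \<in> I)
     \<and> (\<forall>r\<in>R. \<forall>a\<in>I. a * r \<in> I)"

definition left_noetherian_on :: "'a::ring_1 set \<Rightarrow> bool" where
  "left_noetherian_on R \<longleftrightarrow> (\<forall>I :: nat \<Rightarrow> 'a set.
     (\<forall>k. left_ideal_of R (I k)) \<and> (\<forall>k. I k \<subseteq> I (Suc k)) \<longrightarrow> (\<exists>m. \<forall>k\<ge>m. I k = I m))"

definition right_noetherian_on :: "'a::ring_1 set \<Rightarrow> bool" where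
  "right_noetherian_on R \<longleftrightarrow> (\<forall>I :: nat \<Rightarrow> 'a set.
     (\<forall>k. right_ideal_of R (I k)) \<and> (\<forall>k. I k \<subseteq> I (Suc k)) \<longrightarrow> (\<exists>m. \<forall>k\<ge>m. I k = I m))"

definition left_ore_domain_on :: "'a::ring_1 set \<Rightarrow> bool" where
  "left_ore_domain_on D \<longleftrightarrow> domain_on D \<and>
     (\<forall>a\<in>D. \<forall>b\<in>D. b \<noteq> 0 \<longrightarrow> (\<exists>p\<in>D. \<exists>q\<in>D. p \<noteq> 0 \<and> p * a = q * b))"

definition right_ore_domain_on :: "'a::ring_1 set \<Rightarrow> bool" where
  "right_ore_domain_on D \<longleftrightarrow> domain_on D \<and>
     (\<forall>a\<in>D. \<forall>b\<in>D. b \<noteq> 0 \<longrightarrow> (\<exists>p\<in>D. \<exists>q\<in>D. p \<noteq> 0 \<and> a * p = b * q))"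

definition exps :: "nat \<Rightarrow> (nat \<Rightarrow> nat) set" where
  "exps n = {\<alpha>. \<forall>i\<ge>n. \<alpha> i = 0}"

definition monom :: "(nat \<Rightarrow> 'a::ring_1) \<Rightarrow> nat \<Rightarrow> (nat \<Rightarrow> nat) \<Rightarrow> 'a" where
  "monom x n \<alpha> = prod_list (map (\<lambda>i. x i ^ \<alpha> i) [0..<n])"

definition free_left_basis :: "'a::ring_1 set \<Rightarrow> (nat \<Rightarrow> 'a) \<Rightarrow> nat \<Rightarrow> bool" where
  "free_left_basis R x n \<longleftrightarrow>
     (\<forall>a::'a. \<exists>S c. finite S \<and> S \<subseteq> exps n \<and> (\<forall>\<beta>\<in>S. c \<beta> \<in> R) \<and>
        a = (\<Sum>\<beta>\<in>S. c \<beta> * monom x n \<beta>)) \<and>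
     (\<forall>S c. finite S \<and> S \<subseteq> exps n \<and> (\<forall>\<beta>\<in>S. c \<beta> \<in> R) \<and>
        (\<Sum>\<beta>\<in>S. c \<beta> * monom x n \<beta>) = 0 \<longrightarrow> (\<forall>\<beta>\<in>S. c \<beta> = 0))"

definition lin_span :: "'a::ring_1 set \<Rightarrow> (nat \<Rightarrow> 'a) \<Rightarrow> nat \<Rightarrow> 'a set" where
  "lin_span R x n = {r0 + (\<Sum>k<n. r k * x k) | r0 r. r0 \<in> R \<and> (\<forall>k<n. r k \<in> R)}"

definition skew_PBW :: "'a::ring_1 set \<Rightarrow> (nat \<Rightarrow> 'a) \<Rightarrow> nat \<Rightarrow> bool" where
  "skew_PBW R x n \<longleftrightarrow>
     subring_of R \<and>
     free_left_basis R x n \<and>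
     (\<forall>i<n. \<forall>r\<in>R. r \<noteq> 0 \<longrightarrow> (\<exists>c\<in>R. c \<noteq> 0 \<and> x i * r - c * x i \<in> R)) \<and>
     (\<forall>i<n. \<forall>j<n. \<exists>c\<in>R. c \<noteq> 0 \<and> x j * x i - c * x i * x j \<in> lin_span R x n)"

text \<open>Bijective: each sigma_i (with x_i r = sigma_i(r) x_i + delta_i(r)) is a bijection of R,
  and the c_{i,j} (i<j) are invertible in R.\<close>
definition bijective_skew_PBW :: "'a::ring_1 set \<Rightarrow> (nat \<Rightarrow> 'a) \<Rightarrow> nat \<Rightarrow> bool" where
  "bijective_skew_PBW R x n \<longleftrightarrow>
     skew_PBW R x n \<and>
     (\<forall>i<n. \<exists>\<sigma>. bij_betw \<sigma> R R \<and> (\<forall>r\<in>R. x i * r - \<sigma> r * x i \<in> R)) \<and>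
     (\<forall>i<n. \<forall>j<n. i < j \<longrightarrow> (\<exists>c\<in>R. (\<exists>d\<in>R. c * d = 1 \<and> d * c = 1) \<and>
          x j * x i - c * x i * x j \<in> lin_span R x n))"

end

theory Submission
  imports Defs "HOL-Library.FuncSet" "HOL-Library.Function_Algebras"
begin

text \<open>
  A bijective skew PBW extension \<open>A\<close> of \<open>R\<close> is filtered by total degree: \<open>F\<^sub>k\<close> is the free left
  \<open>R\<close>-module on the standard monomials of degree \<open>< k\<close>, and \<open>F\<^sub>k F\<^sub>l \<subseteq> F\<^bsub>k+l-1\<^esub>\<close>. Moving
  coefficients past monomials twists them by bijections of \<open>R\<close>, so the leading coefficient of a
  product of two monomials is nonzero; comparing extremal leading terms shows that \<open>A\<close> is a domain.

  A left Noetherian domain is left Ore: if \<open>Ra \<inter> Rb = 0\<close>, then \<open>\<Sum>\<^sub>j R b a\<^sup>j\<close> is direct and the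
  chain of its partial sums never stabilises. Since \<open>rank F\<^sub>k\<close> grows polynomially in \<open>k\<close>, for some
  \<open>D\<close> the \<open>2 rank F\<^sub>D\<close> elements \<open>x\<^sup>\<gamma> a\<close>, \<open>x\<^sup>\<gamma> b\<close> lie in a filtration piece of smaller rank,
  hence are left dependent over the left Ore domain \<open>R\<close>, which yields \<open>p a = q b\<close> with \<open>p \<noteq> 0\<close>.
  Bijectivity also makes \<open>F\<^sub>k\<close> a free right \<open>R\<close>-module on the same monomials, so the right-handed
  statement is the left-handed one in the opposite ring.
\<close>

definition left_span :: "'a::ring_1 set \<Rightarrow> ('b \<Rightarrow> 'a) \<Rightarrow> 'b set \<Rightarrow> 'a set" where
  "left_span R e S = {(\<Sum>g\<in>S. c g * e g) | c. \<forall>g\<in>S. c g \<in> R}"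

definition right_span :: "'a::ring_1 set \<Rightarrow> ('b \<Rightarrow> 'a) \<Rightarrow> 'b set \<Rightarrow> 'a set" where
  "right_span R e S = {(\<Sum>g\<in>S. e g * c g) | c. \<forall>g\<in>S. c g \<in> R}"

definition left_independent :: "'a::ring_1 set \<Rightarrow> ('b \<Rightarrow> 'a) \<Rightarrow> 'b set \<Rightarrow> bool" where
  "left_independent R e S \<longleftrightarrow>
     (\<forall>c. (\<forall>g\<in>S. c g \<in> R) \<and> (\<Sum>g\<in>S. c g * e g) = 0 \<longrightarrow> (\<forall>g\<in>S. c g = 0))"

definition right_independent :: "'a::ring_1 set \<Rightarrow> ('b \<Rightarrow> 'a) \<Rightarrow> 'b set \<Rightarrow> bool" where
  "right_independent R e S \<longleftrightarrow>
     (\<forall>c. (\<forall>g\<in>S. c g \<in> R) \<and> (\<Sum>g\<in>S. e g * c g) = 0 \<longrightarrow> (\<forall>g\<in>S. c g = 0))"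

lemma left_spanI: "(\<And>g. g \<in> S \<Longrightarrow> c g \<in> R) \<Longrightarrow> (\<Sum>g\<in>S. c g * e g) \<in> left_span R e S"
  unfolding left_span_def by blast

lemma left_spanE:
  assumes "z \<in> left_span R e S"
  obtains c where "\<And>g. g \<in> S \<Longrightarrow> c g \<in> R" "z = (\<Sum>g\<in>S. c g * e g)"
  using assms unfolding left_span_def by blast

lemma left_independentD:
  "left_independent R e S \<Longrightarrow> (\<And>g. g \<in> S \<Longrightarrow> c g \<in> R) \<Longrightarrow> (\<Sum>g\<in>S. c g * e g) = 0 \<Longrightarrow>
     g \<in> S \<Longrightarrow> c g = 0"
  unfolding left_independent_def by blast

locale subring =
  fixes R :: "'a::ring_1 set"
  assumes subring: "subring_of R"
begin

lemma zero_closed [simp]: "0 \<in> R"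
  and one_closed [simp]: "1 \<in> R"
  and add_closed: "a \<in> R \<Longrightarrow> b \<in> R \<Longrightarrow> a + b \<in> R"
  and diff_closed: "a \<in> R \<Longrightarrow> b \<in> R \<Longrightarrow> a - b \<in> R"
  and mult_closed: "a \<in> R \<Longrightarrow> b \<in> R \<Longrightarrow> a * b \<in> R"
  using subring unfolding subring_of_def by auto

lemma uminus_closed: "a \<in> R \<Longrightarrow> - a \<in> R"
  using diff_closed[OF zero_closed] by (metis diff_0)

lemma sum_closed: "(\<And>i. i \<in> S \<Longrightarrow> f i \<in> R) \<Longrightarrow> sum f S \<in> R"
  by (induction S rule: infinite_finite_induct) (auto intro: add_closed)

lemma power_closed: "a \<in> R \<Longrightarrow> a ^ k \<in> R"
  by (induction k) (auto intro: mult_closed)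

lemma left_span_zero [simp]: "0 \<in> left_span R e S"
  using left_spanI[of S "\<lambda>_. 0" R e] by simp

lemma left_span_add:
  assumes "z \<in> left_span R e S" "z' \<in> left_span R e S"
  shows "z + z' \<in> left_span R e S"
proof -
  obtain c where c: "\<And>g. g \<in> S \<Longrightarrow> c g \<in> R" "z = (\<Sum>g\<in>S. c g * e g)"
    using assms(1) by (blast elim: left_spanE)
  obtain c' where c': "\<And>g. g \<in> S \<Longrightarrow> c' g \<in> R" "z' = (\<Sum>g\<in>S. c' g * e g)"
    using assms(2) by (blast elim: left_spanE)
  have "z + z' = (\<Sum>g\<in>S. (c g + c' g) * e g)"
    unfolding c c' by (simp add: sum.distrib distrib_right)
  moreover have "c g + c' g \<in> R" if "g \<in> S" for g
    using c c' that by (blast intro: add_closed)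
  ultimately show ?thesis using left_spanI[of S "\<lambda>g. c g + c' g" R e] by simp
qed

lemma left_span_mult:
  assumes "r \<in> R" "z \<in> left_span R e S"
  shows "r * z \<in> left_span R e S"
proof -
  obtain c where c: "\<And>g. g \<in> S \<Longrightarrow> c g \<in> R" "z = (\<Sum>g\<in>S. c g * e g)"
    using assms(2) by (blast elim: left_spanE)
  have "r * z = (\<Sum>g\<in>S. (r * c g) * e g)"
    unfolding c by (simp add: sum_distrib_left mult.assoc)
  moreover have "r * c g \<in> R" if "g \<in> S" for g
    using c assms(1) that by (blast intro: mult_closed)
  ultimately show ?thesis using left_spanI[of S "\<lambda>g. r * c g" R e] by simp
qed

lemma left_span_uminus: "z \<in> left_span R e S \<Longrightarrow> - z \<in> left_span R e S"
  using left_span_mult[OF uminus_closed[OF one_closed]] by simp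

lemma left_span_diff:
  "z \<in> left_span R e S \<Longrightarrow> z' \<in> left_span R e S \<Longrightarrow> z - z' \<in> left_span R e S"
  by (metis diff_conv_add_uminus left_span_add left_span_uminus)

lemma left_span_sum:
  "(\<And>i. i \<in> I \<Longrightarrow> f i \<in> left_span R e S) \<Longrightarrow> sum f I \<in> left_span R e S"
  by (induction I rule: infinite_finite_induct) (auto intro: left_span_add)

lemma left_span_generator:
  assumes "finite S" "g \<in> S" "r \<in> R"
  shows "r * e g \<in> left_span R e S"
proof -
  have "(\<Sum>h\<in>S. (if h = g then r else 0) * e h) = (\<Sum>h\<in>S. if h = g then r * e h else 0)"
    by (intro sum.cong) auto
  hence "r * e g = (\<Sum>h\<in>S. (if h = g then r else 0) * e h)"
    using assms by simp
  thus ?thesis using left_spanI[of S "\<lambda>h. if h = g then r else 0" R e] assms by simp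
qed

lemma left_span_mono:
  assumes "finite S'" "S \<subseteq> S'"
  shows "left_span R e S \<subseteq> left_span R e S'"
proof
  fix z assume "z \<in> left_span R e S"
  then obtain c where c: "\<And>g. g \<in> S \<Longrightarrow> c g \<in> R" "z = (\<Sum>g\<in>S. c g * e g)"
    by (blast elim: left_spanE)
  have "z = (\<Sum>g\<in>S. (if g \<in> S then c g else 0) * e g)" unfolding c by simp
  also have "\<dots> = (\<Sum>g\<in>S'. (if g \<in> S then c g else 0) * e g)"
    using assms by (intro sum.mono_neutral_left) auto
  finally show "z \<in> left_span R e S'"
    using left_spanI[of S' "\<lambda>g. if g \<in> S then c g else 0" R e] c by simp
qed

lemma left_span_left_ideal:
  assumes "\<And>g. g \<in> S \<Longrightarrow> e g \<in> R"
  shows "left_ideal_of R (left_span R e S)"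
proof -
  have "left_span R e S \<subseteq> R"
    using assms by (auto elim!: left_spanE intro!: sum_closed mult_closed)
  thus ?thesis unfolding left_ideal_of_def by (auto intro!: left_span_add left_span_mult)
qed

section \<open>Left Noetherian domains are left Ore\<close>

lemma power_not_in_left_span:
  assumes a: "a \<in> R" and b: "b \<in> R" "b \<noteq> 0"
    and no_pair: "\<And>p q. p \<in> R \<Longrightarrow> q \<in> R \<Longrightarrow> p * a = q * b \<Longrightarrow> p = 0"
  shows "b * a ^ k \<notin> left_span R (\<lambda>j. b * a ^ j) {..<k}"
proof (induction k)
  case 0
  show ?case using b unfolding left_span_def by simp
next
  case (Suc k)
  show ?case
  proof
    assume "b * a ^ Suc k \<in> left_span R (\<lambda>j. b * a ^ j) {..<Suc k}"
    then obtain c where c: "\<And>j. j \<in> {..<Suc k} \<Longrightarrow> c j \<in> R"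
      and eq: "b * a ^ Suc k = (\<Sum>j<Suc k. c j * (b * a ^ j))"
      unfolding left_span_def by blast
    define s where "s = (\<Sum>j<k. c (Suc j) * (b * a ^ j))"
    have s: "s \<in> left_span R (\<lambda>j. b * a ^ j) {..<k}"
      unfolding s_def using c by (intro left_spanI) simp
    have "s \<in> R"
      using s left_span_left_ideal[of "{..<k}" "\<lambda>j. b * a ^ j"] a b
      unfolding left_ideal_of_def by (auto simp: mult_closed power_closed)
    have "b * a ^ Suc k = c 0 * b + s * a"
      unfolding eq s_def sum.lessThan_Suc_shift
        by (simp add: sum_distrib_right mult.assoc power_commutes)
    hence "(b * a ^ k - s) * a = c 0 * b" by (simp add: left_diff_distrib mult.assoc power_commutes)
    moreover have "b * a ^ k - s \<in> R" using \<open>s \<in> R\<close>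
      by (intro diff_closed mult_closed power_closed a b(1))
    ultimately have "b * a ^ k - s = 0" using no_pair c[of 0] by blast
    thus False using Suc.IH s by simp
  qed
qed

lemma left_ore_domain_if_left_noetherian:
  assumes dom: "domain_on R" and noeth: "left_noetherian_on R"
  shows "left_ore_domain_on R"
  unfolding left_ore_domain_on_def
proof (intro conjI dom ballI impI)
  fix a b assume a: "a \<in> R" and b: "b \<in> R" "b \<noteq> 0"
  show "\<exists>p\<in>R. \<exists>q\<in>R. p \<noteq> 0 \<and> p * a = q * b"
  proof (rule ccontr)
    assume "\<not> ?thesis"
    hence no_pair: "p = 0" if "p \<in> R" "q \<in> R" "p * a = q * b" for p q using that by blast
    define I where "I k = left_span R (\<lambda>j. b * a ^ j) {..<k}" for k
    have "left_ideal_of R (I k)" for k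
      unfolding I_def by (intro left_span_left_ideal mult_closed power_closed a b(1))
    moreover have "I k \<subseteq> I (Suc k)" for k
      unfolding I_def by (intro left_span_mono) auto
    ultimately obtain m where "I (Suc m) = I m"
      using noeth unfolding left_noetherian_on_def by (metis le_SucI order_refl)
    moreover have "b * a ^ m \<in> I (Suc m)"
      using left_span_generator[of "{..<Suc m}" m 1 "\<lambda>j. b * a ^ j"] unfolding I_def by simp
    ultimately show False
      using power_not_in_left_span[OF a b no_pair, where k = m] unfolding I_def by simp
  qed
qed

section \<open>Polynomial growth and the Ore condition\<close>

text \<open>Eliminate one equation at a time, using the Ore condition to clear the pivot column.\<close>

lemma left_ore_nontrivial_solution:
  assumes ore: "left_ore_domain_on R"
  shows "finite G \<Longrightarrow> finite J \<Longrightarrow> card G < card J \<Longrightarrow> (\<forall>j\<in>J. \<forall>g\<in>G. v j g \<in> R) \<Longrightarrow>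
    \<exists>r. (\<forall>j\<in>J. r j \<in> R) \<and> (\<exists>j\<in>J. r j \<noteq> 0) \<and> (\<forall>g\<in>G. (\<Sum>j\<in>J. r j * v j g) = 0)"
proof (induction G arbitrary: J v rule: finite_induct)
  case empty
  then obtain j0 where j0: "j0 \<in> J" by fastforce
  have "(1::'a) \<noteq> 0" using ore unfolding left_ore_domain_on_def domain_on_def by blast
  thus ?case using j0 by (intro exI[of _ "\<lambda>j. if j = j0 then 1 else 0"]) auto
next
  case (insert g0 G)
  note finJ = insert.prems(1) and vR = insert.prems(3)
  have cardG: "card G < card J" using insert.prems(2) insert.hyps by simp
  show ?case
  proof (cases "\<forall>j\<in>J. v j g0 = 0")
    case True
    then show ?thesis using insert.IH[OF finJ cardG] vR by auto
  next
    case False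
    then obtain j0 where j0: "j0 \<in> J" "v j0 g0 \<noteq> 0" by blast
    define J' where "J' = J - {j0}"
    have finJ': "finite J'" and cardJ': "card G < card J'"
      unfolding J'_def using insert finJ j0(1) by auto
    have "\<exists>p q. p \<in> R \<and> q \<in> R \<and> p \<noteq> 0 \<and> p * v j g0 = q * v j0 g0" if "j \<in> J'" for j
    proof -
      have "v j g0 \<in> R" "v j0 g0 \<in> R" using vR j0(1) that unfolding J'_def by auto
      thus ?thesis using ore j0(2) unfolding left_ore_domain_on_def by blast
    qed
    then obtain p q where pq: "\<And>j. j \<in> J' \<Longrightarrow>
        p j \<in> R \<and> q j \<in> R \<and> p j \<noteq> 0 \<and> p j * v j g0 = q j * v j0 g0"
      by metis
    define w where "w j g = p j * v j g - q j * v j0 g" for j g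
    have "\<forall>j\<in>J'. \<forall>g\<in>G. w j g \<in> R"
      unfolding w_def using pq vR j0(1) unfolding J'_def by (auto intro!: diff_closed mult_closed)
    then obtain s where s: "\<forall>j\<in>J'. s j \<in> R" "\<exists>j\<in>J'. s j \<noteq> 0"
      "\<forall>g\<in>G. (\<Sum>j\<in>J'. s j * w j g) = 0"
      using insert.IH[OF finJ' cardJ'] by blast
    define r where "r j = (if j = j0 then - (\<Sum>i\<in>J'. s i * q i) else s j * p j)" for j
    have "\<forall>j\<in>J. r j \<in> R"
      unfolding r_def J'_def using s(1) pq
      by (auto intro!: uminus_closed sum_closed mult_closed simp: J'_def)
    moreover have "\<exists>j\<in>J. r j \<noteq> 0"
    proof -
      obtain j where j: "j \<in> J'" "s j \<noteq> 0" using s(2) by blast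
      have "s j * p j \<noteq> 0"
        using ore pq[OF j(1)] s(1) j unfolding left_ore_domain_on_def domain_on_def by blast
      thus ?thesis using j(1) unfolding r_def J'_def by (intro bexI[of _ j]) auto
    qed
    moreover have "(\<Sum>j\<in>J. r j * v j g) = (\<Sum>j\<in>J'. s j * w j g)" for g
    proof -
      have "(\<Sum>j\<in>J. r j * v j g) = r j0 * v j0 g + (\<Sum>j\<in>J'. r j * v j g)"
        unfolding J'_def using finJ j0(1) by (rule sum.remove)
      also have "(\<Sum>j\<in>J'. r j * v j g) = (\<Sum>j\<in>J'. s j * p j * v j g)"
        unfolding r_def J'_def by (intro sum.cong) auto
      finally show ?thesis unfolding w_def r_def
        by (simp add: right_diff_distrib sum_subtractf sum_distrib_right mult.assoc)
    qed
    moreover have "(\<Sum>j\<in>J'. s j * w j g0) = 0"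
      using pq by (intro sum.neutral) (simp add: w_def)
    ultimately show ?thesis using s(3) by auto
  qed
qed

lemma left_span_dependent:
  assumes ore: "left_ore_domain_on R" and fin: "finite G" "finite J" and card: "card G < card J"
    and w: "\<And>j. j \<in> J \<Longrightarrow> w j \<in> left_span R e G"
  shows "\<exists>r. (\<forall>j\<in>J. r j \<in> R) \<and> (\<exists>j\<in>J. r j \<noteq> 0) \<and> (\<Sum>j\<in>J. r j * w j) = 0"
proof -
  have "\<exists>c. (\<forall>g\<in>G. c g \<in> R) \<and> w j = (\<Sum>g\<in>G. c g * e g)" if "j \<in> J" for j
    using w[OF that] unfolding left_span_def by blast
  then obtain c where c: "\<And>j. j \<in> J \<Longrightarrow> (\<forall>g\<in>G. c j g \<in> R) \<and> w j = (\<Sum>g\<in>G. c j g * e g)"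
    by metis
  then obtain r where r: "\<forall>j\<in>J. r j \<in> R" "\<exists>j\<in>J. r j \<noteq> 0" "\<forall>g\<in>G. (\<Sum>j\<in>J. r j * c j g) = 0"
    using left_ore_nontrivial_solution[OF ore fin card, of c] by blast
  have "(\<Sum>j\<in>J. r j * w j) = (\<Sum>j\<in>J. \<Sum>g\<in>G. r j * (c j g * e g))"
    using c by (intro sum.cong) (simp_all add: sum_distrib_left)
  also have "\<dots> = (\<Sum>g\<in>G. (\<Sum>j\<in>J. r j * c j g) * e g)"
    by (subst sum.swap) (simp add: sum_distrib_right mult.assoc)
  also have "\<dots> = 0" using r(3) by simp
  finally show ?thesis using r(1,2) by blast
qed

end

lemma exists_pow2_ge_linear: "\<exists>s. A * s + B \<le> (2::nat) ^ s"
proof -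
  define k where "k = 2 * A + B + 1"
  have "k + 1 \<le> 2 ^ k" using less_exp[of k] by (simp add: Suc_le_eq)
  hence "(k + 1) * (k + 1) \<le> 2 ^ k * 2 ^ k" by (intro mult_mono) auto
  also have "\<dots> = 2 ^ (2 * k)" by (simp add: power_add[symmetric] mult_2)
  finally have "(k + 1) * (k + 1) \<le> 2 ^ (2 * k)" .
  moreover have "A * (2 * k) + B \<le> (k + 1) * (k + 1)"
    unfolding k_def by (simp add: algebra_simps)
  ultimately show ?thesis by (intro exI[of _ "2 * k"]) linarith
qed

lemma exists_pow2_gt_polynomial: "\<exists>t. (t * c + 1) ^ N < (2::nat) ^ t"
proof -
  define C where "C = (c + 1) ^ N"
  obtain s where s: "N * s + C \<le> (2::nat) ^ s" using exists_pow2_ge_linear by blast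
  define t where "t = (2::nat) ^ s"
  have "t * c + 1 \<le> t * (c + 1)" unfolding t_def by (simp add: algebra_simps)
  hence "(t * c + 1) ^ N \<le> (t * (c + 1)) ^ N" by (rule power_mono) simp
  also have "\<dots> = 2 ^ (s * N) * C" unfolding t_def C_def
    by (simp only: power_mult_distrib power_mult)
  also have "\<dots> < 2 ^ (s * N) * 2 ^ C" using less_exp[of C] by simp
  also have "\<dots> = 2 ^ (N * s + C)" by (simp add: power_add mult.commute)
  also have "\<dots> \<le> 2 ^ t" unfolding t_def using s by (intro power_increasing) auto
  finally show ?thesis by blast
qed

lemma polynomial_growth_not_doubling:
  fixes f :: "nat \<Rightarrow> nat"
  assumes bound: "\<And>k. f k \<le> (k + 1) ^ N" and pos: "0 < f 0"
  shows "\<exists>k. f (k + c) < 2 * f k"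
proof (rule ccontr)
  assume "\<not> ?thesis"
  hence doubling: "2 * f k \<le> f (k + c)" for k by (simp add: not_less)
  have "2 ^ i \<le> f (i * c)" for i
  proof (induction i)
    case (Suc i)
    have "2 ^ Suc i \<le> 2 * f (i * c)" using Suc by simp
    also have "\<dots> \<le> f (Suc i * c)" using doubling[of "i * c"] by (simp add: add.commute)
    finally show ?case .
  qed (use pos in simp)
  moreover obtain t where "(t * c + 1) ^ N < (2::nat) ^ t" using exists_pow2_gt_polynomial by blast
  ultimately show False using bound[of "t * c"] by (meson le_trans not_le)
qed

context subring
begin

lemma ore_pair_if_dependent:
  assumes dom: "domain_on (UNIV :: 'a set)" and indep: "left_independent R e S" and b: "b \<noteq> 0"
    and r: "\<forall>j\<in>S \<times> UNIV. r j \<in> R" "\<exists>j\<in>S \<times> UNIV. r j \<noteq> 0"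
      "(\<Sum>j\<in>S \<times> UNIV. r j * (e (fst j) * (if snd j then b else a))) = 0"
  shows "\<exists>p q. p \<noteq> 0 \<and> p * a = q * b"
proof -
  define p where "p = (\<Sum>\<gamma>\<in>S. r (\<gamma>, False) * e \<gamma>)"
  define q where "q = (\<Sum>\<gamma>\<in>S. r (\<gamma>, True) * e \<gamma>)"
  have "(\<Sum>j\<in>S \<times> UNIV. r j * (e (fst j) * (if snd j then b else a))) =
      (\<Sum>\<gamma>\<in>S. \<Sum>s\<in>UNIV. r (\<gamma>, s) * (e \<gamma> * (if s then b else a)))"
    by (simp add: sum.cartesian_product case_prod_beta)
  also have "\<dots> = (\<Sum>\<gamma>\<in>S. r (\<gamma>, False) * (e \<gamma> * a) + r (\<gamma>, True) * (e \<gamma> * b))"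
    by (simp add: UNIV_bool)
  also have "\<dots> = p * a + q * b"
    unfolding p_def q_def by (simp add: sum.distrib sum_distrib_right mult.assoc)
  finally have pq: "p * a + q * b = 0" using r(3) by simp
  have rR: "r (\<gamma>, s) \<in> R" if "\<gamma> \<in> S" for \<gamma> s using r(1) that by simp
  have "p \<noteq> 0"
  proof
    assume p: "p = 0"
    hence "q * b = 0" using pq by simp
    hence "q = 0" using dom b unfolding domain_on_def by blast
    hence "r (\<gamma>, s) = 0" if "\<gamma> \<in> S" for \<gamma> s
      using p indep rR that unfolding p_def q_def by (cases s) (auto elim: left_independentD)
    thus False using r(2) by auto
  qed
  moreover have "p * a = (- q) * b" using pq by (simp add: eq_neg_iff_add_eq_0)
  ultimately show ?thesis by blast
qed

theorem left_ore_domain_if_polynomial_growth: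
  fixes e :: "'b \<Rightarrow> 'a" and B :: "nat \<Rightarrow> 'b set"
  assumes ore: "left_ore_domain_on R" and dom: "domain_on (UNIV :: 'a set)"
    and fin: "\<And>k. finite (B k)" and mono: "mono B" and nonempty: "B 0 \<noteq> {}"
    and growth: "\<And>k. card (B k) \<le> (k + 1) ^ N"
    and indep: "\<And>k. left_independent R e (B k)"
    and exhaust: "\<And>a. \<exists>k. a \<in> left_span R e (B k)"
    and filtered: "\<And>a b k l. a \<in> left_span R e (B k) \<Longrightarrow> b \<in> left_span R e (B l) \<Longrightarrow>
       a * b \<in> left_span R e (B (k + l))"
  shows "left_ore_domain_on (UNIV :: 'a set)"
  unfolding left_ore_domain_on_def
proof (intro conjI dom ballI impI)
  fix a b :: 'a assume b: "b \<noteq> 0"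
  let ?F = "\<lambda>k. left_span R e (B k)"
  obtain ka kb where "a \<in> ?F ka" "b \<in> ?F kb" using exhaust by blast
  moreover have "?F k \<subseteq> ?F (ka + kb)" if "k \<le> ka + kb" for k
    using fin mono that by (intro left_span_mono) (auto dest: monoD)
  ultimately have ab: "a \<in> ?F (ka + kb)" "b \<in> ?F (ka + kb)" by (meson le_add1 le_add2 subsetD)+
  obtain D where D: "card (B (D + (ka + kb))) < 2 * card (B D)"
    using polynomial_growth_not_doubling[of "\<lambda>k. card (B k)" N "ka + kb"] growth fin nonempty
    by (auto simp: card_gt_0_iff)
  \<comment> \<open>The \<open>2 |B D|\<close> products \<open>e \<gamma> a\<close>, \<open>e \<gamma> b\<close> all lie in \<open>F (D + ka + kb)\<close>,
    which has fewer generators.\<close>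
  define J where "J = B D \<times> (UNIV :: bool set)"
  define w where "w j = e (fst j) * (if snd j then b else a)" for j
  have "w j \<in> ?F (D + (ka + kb))" if "j \<in> J" for j
  proof -
    have "1 * e (fst j) \<in> ?F D" using that fin unfolding J_def by (intro left_span_generator) auto
    thus ?thesis unfolding w_def using ab by (intro filtered) auto
  qed
  moreover have "card (B (D + (ka + kb))) < card J" "finite J"
    unfolding J_def using D fin by (simp_all add: card_cartesian_product)
  ultimately obtain r where "\<forall>j\<in>J. r j \<in> R" "\<exists>j\<in>J. r j \<noteq> 0" "(\<Sum>j\<in>J. r j * w j) = 0"
    using left_span_dependent[OF ore fin] by blast
  thus "\<exists>p\<in>UNIV. \<exists>q\<in>UNIV. p \<noteq> 0 \<and> p * a = q * b"
    using ore_pair_if_dependent[OF dom indep b] unfolding J_def w_def by blast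
qed

end

section \<open>The opposite ring\<close>

datatype 'a opp = Opp (unopp: 'a)

instantiation opp :: (ring_1) ring_1
begin

definition "0 = Opp 0"
definition "1 = Opp 1"
definition "a + b = Opp (unopp a + unopp b)"
definition "a - b = Opp (unopp a - unopp b)"
definition "- a = Opp (- unopp a)"
definition "a * b = Opp (unopp b * unopp a)"

instance
  by standard (simp_all add: zero_opp_def one_opp_def plus_opp_def minus_opp_def uminus_opp_def
      times_opp_def opp.expand algebra_simps)

end

lemma
  fixes a b :: "'a::ring_1 opp" and c d :: 'a
  shows unopp_zero [simp]: "unopp (0 :: 'a opp) = 0"
  and unopp_add [simp]: "unopp (a + b) = unopp a + unopp b"
  and unopp_mult [simp]: "unopp (a * b) = unopp b * unopp a"
  and Opp_mult [simp]: "Opp c * Opp d = Opp (d * c)"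
  and Opp_eq_zero_iff [simp]: "Opp c = 0 \<longleftrightarrow> c = 0"
  and opp_one_neq_zero_iff: "(1 :: 'a opp) \<noteq> 0 \<longleftrightarrow> (1 :: 'a) \<noteq> 0"
  by (simp_all add: zero_opp_def one_opp_def plus_opp_def times_opp_def)

lemma unopp_sum [simp]: "unopp (sum f S) = (\<Sum>i\<in>S. unopp (f i :: 'a::ring_1 opp))"
  by (induction S rule: infinite_finite_induct) simp_all

lemma mem_Opp_image_iff: "z \<in> Opp ` S \<longleftrightarrow> unopp z \<in> S"
  by (cases z) auto

lemma subring_of_Opp_image: "subring_of R \<Longrightarrow> subring_of (Opp ` R)"
  unfolding subring_of_def by (simp add: zero_opp_def one_opp_def plus_opp_def minus_opp_def)

lemma domain_on_Opp_image_iff: "domain_on (Opp ` D) \<longleftrightarrow> domain_on D"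
  unfolding domain_on_def opp_one_neq_zero_iff by auto

lemma left_ore_domain_on_Opp_image_iff:
  "left_ore_domain_on (Opp ` D) \<longleftrightarrow> right_ore_domain_on D"
  unfolding left_ore_domain_on_def right_ore_domain_on_def domain_on_Opp_image_iff by auto

lemma left_ideal_of_Opp_image_iff: "left_ideal_of (Opp ` R) (Opp ` I) \<longleftrightarrow> right_ideal_of R I"
  unfolding left_ideal_of_def right_ideal_of_def
  by (simp add: zero_opp_def plus_opp_def inj_image_mem_iff inj_image_subset_iff inj_def)

lemma left_noetherian_on_Opp_image:
  assumes "right_noetherian_on R"
  shows "left_noetherian_on (Opp ` R)"
  unfolding left_noetherian_on_def
proof (intro allI impI)
  fix I :: "nat \<Rightarrow> 'a opp set"
  assume chain: "(\<forall>k. left_ideal_of (Opp ` R) (I k)) \<and> (\<forall>k. I k \<subseteq> I (Suc k))"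
  have I: "I k = Opp ` unopp ` I k" for k by (simp add: image_image)
  have "right_ideal_of R (unopp ` I k)" for k
    using chain left_ideal_of_Opp_image_iff I by metis
  moreover have "unopp ` I k \<subseteq> unopp ` I (Suc k)" for k
    using chain by blast
  ultimately obtain m where "\<forall>k\<ge>m. unopp ` I k = unopp ` I m"
    using assms unfolding right_noetherian_on_def by presburger
  thus "\<exists>m. \<forall>k\<ge>m. I k = I m" using I by metis
qed

lemma left_span_Opp_image:
  "left_span (Opp ` R) (Opp \<circ> e) S = Opp ` right_span R e S"
proof
  show "left_span (Opp ` R) (Opp \<circ> e) S \<subseteq> Opp ` right_span R e S"
  proof
    fix z assume "z \<in> left_span (Opp ` R) (Opp \<circ> e) S"
    then obtain c where c: "\<And>g. g \<in> S \<Longrightarrow> c g \<in> Opp ` R" and z: "z = (\<Sum>g\<in>S. c g * Opp (e g))"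
      unfolding left_span_def by auto
    have "unopp z \<in> right_span R e S"
      unfolding right_span_def z using c
        by (auto simp: mem_Opp_image_iff intro!: exI[of _ "\<lambda>g. unopp (c g)"])
    thus "z \<in> Opp ` right_span R e S" by (metis image_eqI opp.collapse)
  qed
  show "Opp ` right_span R e S \<subseteq> left_span (Opp ` R) (Opp \<circ> e) S"
  proof
    fix z assume "z \<in> Opp ` right_span R e S"
    then obtain c where c: "\<And>g. g \<in> S \<Longrightarrow> c g \<in> R" and z: "z = Opp (\<Sum>g\<in>S. e g * c g)"
      unfolding right_span_def by auto
    thus "z \<in> left_span (Opp ` R) (Opp \<circ> e) S"
      unfolding left_span_def using c by (auto simp: opp.expand intro!: exI[of _ "\<lambda>g. Opp (c g)"])
  qed
qed

lemma left_independent_Opp_image: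
  assumes "right_independent R e S"
  shows "left_independent (Opp ` R) (Opp \<circ> e) S"
  unfolding left_independent_def
proof (intro allI impI ballI)
  fix c g assume c: "(\<forall>g\<in>S. c g \<in> Opp ` R) \<and> (\<Sum>g\<in>S. c g * (Opp \<circ> e) g) = 0" and g: "g \<in> S"
  have "(\<Sum>g\<in>S. e g * unopp (c g)) = unopp (\<Sum>g\<in>S. c g * (Opp \<circ> e) g)" by simp
  also have "\<dots> = 0" using c by simp
  finally have "(\<Sum>g\<in>S. e g * unopp (c g)) = 0" .
  moreover have "\<forall>g\<in>S. unopp (c g) \<in> R" using c by (auto simp: mem_Opp_image_iff)
  ultimately have "unopp (c g) = 0"
    using spec[OF assms[unfolded right_independent_def], of "\<lambda>g. unopp (c g)"] g by blast
  thus "c g = 0" by (simp add: opp.expand)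
qed

section \<open>Exponent vectors and standard monomials\<close>

definition exp_unit :: "nat \<Rightarrow> nat \<Rightarrow> nat" where
  "exp_unit i j = (if j = i then 1 else 0)"

lemma zero_in_exps [simp]: "0 \<in> exps n"
  and add_in_exps: "\<alpha> \<in> exps n \<Longrightarrow> \<beta> \<in> exps n \<Longrightarrow> \<alpha> + \<beta> \<in> exps n"
  and exp_unit_in_exps: "i < n \<Longrightarrow> exp_unit i \<in> exps n"
  unfolding exps_def exp_unit_def by auto

lemma monom_zero [simp]: "monom x n 0 = 1"
  unfolding monom_def by (induction n) auto

lemma monom_exp_unit_add:
  assumes "i < n" and below: "\<forall>l<i. \<gamma> l = 0"
  shows "monom x n (exp_unit i + \<gamma>) = x i * monom x n \<gamma>"
proof -
  have "[0..<n] = [0..<i] @ [i..<n]" using upt_add_eq_append[of 0 i "n - i"] assms(1) by simp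
  also have "[i..<n] = i # [Suc i..<n]" using assms(1) by (simp add: upt_conv_Cons)
  finally have split: "[0..<n] = [0..<i] @ i # [Suc i..<n]" .
  have head: "prod_list (map (\<lambda>l. x l ^ \<delta> l) [0..<i]) = 1" if "\<forall>l<i. \<delta> l = 0"
    for \<delta> :: "nat \<Rightarrow> nat"
    using that by (induction i) auto
  have "exp_unit i i = 1" "\<forall>l<i. (exp_unit i + \<gamma>) l = 0"
    using below by (simp_all add: exp_unit_def)
  moreover have "(\<Prod>l\<leftarrow>[Suc i..<n]. x l ^ (exp_unit i l + \<gamma> l)) = (\<Prod>l\<leftarrow>[Suc i..<n]. x l ^ \<gamma> l)"
    by (intro arg_cong[where f = prod_list] map_cong refl) (simp add: exp_unit_def)
  ultimately show ?thesis
    unfolding monom_def split using head[of "exp_unit i + \<gamma>"] head[OF below]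
    by (simp add: mult.assoc)
qed

lemma monom_exp_unit: "i < n \<Longrightarrow> monom x n (exp_unit i) = x i"
  using monom_exp_unit_add[of i n 0 x] by simp

lemma exps_decompose_lowest:
  assumes "\<gamma> \<in> exps n" "\<gamma> \<noteq> 0"
  obtains j \<gamma>' where "j < n" "\<gamma>' \<in> exps n" "\<gamma> = exp_unit j + \<gamma>'" "\<forall>l<j. \<gamma>' l = 0"
proof -
  obtain l where "\<gamma> l \<noteq> 0" using assms(2) by (auto simp: fun_eq_iff)
  define j where "j = (LEAST l. \<gamma> l \<noteq> 0)"
  have j: "\<gamma> j \<noteq> 0" "\<forall>l<j. \<gamma> l = 0"
    unfolding j_def using \<open>\<gamma> l \<noteq> 0\<close> not_less_Least by (auto intro: LeastI)
  hence "j < n" using assms(1) unfolding exps_def by (metis (mono_tags) mem_Collect_eq not_le)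
  show ?thesis
  proof (rule that[of j "\<gamma>(j := \<gamma> j - 1)"])
    show "\<gamma> = exp_unit j + \<gamma>(j := \<gamma> j - 1)" using j by (auto simp: exp_unit_def fun_eq_iff)
  qed (use \<open>j < n\<close> j assms(1) in \<open>auto simp: exps_def\<close>)
qed

lemma sum_digits_less:
  "(\<forall>i<m. \<gamma> i < (K::nat)) \<Longrightarrow> (\<Sum>i<m. \<gamma> i * K ^ i) < K ^ m"
proof (induction m)
  case (Suc m)
  have "(\<Sum>i<Suc m. \<gamma> i * K ^ i) < K ^ m + \<gamma> m * K ^ m" using Suc by simp
  also have "\<dots> \<le> K ^ Suc m"
    using Suc.prems mult_le_mono1[of "Suc (\<gamma> m)" K "K ^ m"] by (simp add: Suc_le_eq)
  finally show ?case .
qed simp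

lemma sum_digits_inj:
  "(\<forall>i<m. \<gamma> i < (K::nat)) \<Longrightarrow> (\<forall>i<m. \<delta> i < K) \<Longrightarrow>
     (\<Sum>i<m. \<gamma> i * K ^ i) = (\<Sum>i<m. \<delta> i * K ^ i) \<Longrightarrow> \<forall>i<m. \<gamma> i = \<delta> i"
proof (induction m)
  case (Suc m)
  let ?A = "\<Sum>i<m. \<gamma> i * K ^ i" and ?B = "\<Sum>i<m. \<delta> i * K ^ i"
  have A: "?A < K ^ m" and B: "?B < K ^ m" using Suc.prems by (auto intro!: sum_digits_less)
  have eq: "?A + \<gamma> m * K ^ m = ?B + \<delta> m * K ^ m" using Suc.prems(3) by simp
  have K: "K ^ m \<noteq> 0" using A by linarith
  have "\<gamma> m = (?A + \<gamma> m * K ^ m) div K ^ m" "\<delta> m = (?B + \<delta> m * K ^ m) div K ^ m"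
    by (simp_all only: div_mult_self1[OF K] div_less[OF A] div_less[OF B] add_0_right)
  hence top: "\<gamma> m = \<delta> m" using eq by simp
  hence "?A = ?B" using eq by simp
  hence "\<forall>i<m. \<gamma> i = \<delta> i" using Suc.prems by (intro Suc.IH) auto
  thus ?case using top by (auto simp: less_Suc_eq)
qed simp

lemma exps_extremal_pair:
  assumes fin: "finite Sa" "finite Sb" and sub: "Sa \<subseteq> exps n" "Sb \<subseteq> exps n"
    and ne: "Sa \<noteq> {}" "Sb \<noteq> {}"
  obtains \<alpha>0 \<beta>0 where "\<alpha>0 \<in> Sa" "\<beta>0 \<in> Sb"
    "\<And>\<alpha> \<beta>. \<alpha> \<in> Sa \<Longrightarrow> \<beta> \<in> Sb \<Longrightarrow> \<alpha> + \<beta> = \<alpha>0 + \<beta>0 \<Longrightarrow> \<alpha> = \<alpha>0 \<and> \<beta> = \<beta>0"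
proof -
  \<comment> \<open>Maximise a base-\<open>K\<close> weight, which is additive and, for \<open>K\<close> above all entries, injective.\<close>
  define K where "K = Suc (Max ((\<lambda>(\<gamma>, i). \<gamma> i) ` ((Sa \<union> Sb) \<times> {..<n})))"
  define w where "w \<gamma> = (\<Sum>i<n. \<gamma> i * K ^ i)" for \<gamma> :: "nat \<Rightarrow> nat"
  have bound: "\<gamma> i < K" if "\<gamma> \<in> Sa \<union> Sb" "i < n" for \<gamma> i
  proof -
    have "\<gamma> i \<in> (\<lambda>(\<gamma>, i). \<gamma> i) ` ((Sa \<union> Sb) \<times> {..<n})" using that by force
    thus ?thesis unfolding K_def using fin by (simp add: le_imp_less_Suc)
  qed
  have w_add: "w (\<alpha> + \<beta>) = w \<alpha> + w \<beta>" for \<alpha> \<beta>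
    unfolding w_def by (simp add: sum.distrib add_mult_distrib)
  have w_inj: "\<alpha> = \<beta>" if "\<alpha> \<in> Sa \<union> Sb" "\<beta> \<in> Sa \<union> Sb" "w \<alpha> = w \<beta>" for \<alpha> \<beta>
  proof
    fix i
    show "\<alpha> i = \<beta> i"
    proof (cases "i < n")
      case True
      thus ?thesis using sum_digits_inj[of n \<alpha> K \<beta>] bound that unfolding w_def by blast
    next
      case False
      hence "\<alpha> i = 0" "\<beta> i = 0" using sub that unfolding exps_def by (auto simp: not_less)
      thus ?thesis by simp
    qed
  qed
  have "Max (w ` Sa) \<in> w ` Sa" using fin ne by (intro Max_in) auto
  then obtain \<alpha>0 where \<alpha>0: "\<alpha>0 \<in> Sa" "w \<alpha>0 = Max (w ` Sa)" by auto
  have "Max (w ` Sb) \<in> w ` Sb" using fin ne by (intro Max_in) auto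
  then obtain \<beta>0 where \<beta>0: "\<beta>0 \<in> Sb" "w \<beta>0 = Max (w ` Sb)" by auto
  show ?thesis
  proof (rule that[OF \<alpha>0(1) \<beta>0(1)])
    fix \<alpha> \<beta> assume \<alpha>: "\<alpha> \<in> Sa" and \<beta>: "\<beta> \<in> Sb" and sum: "\<alpha> + \<beta> = \<alpha>0 + \<beta>0"
    have "w \<alpha> \<le> w \<alpha>0" "w \<beta> \<le> w \<beta>0" using \<alpha>0 \<beta>0 \<alpha> \<beta> fin by simp_all
    moreover have "w \<alpha> + w \<beta> = w \<alpha>0 + w \<beta>0" using sum w_add by metis
    ultimately have "w \<alpha> = w \<alpha>0" "w \<beta> = w \<beta>0" by linarith+
    thus "\<alpha> = \<alpha>0 \<and> \<beta> = \<beta>0" using w_inj \<alpha> \<beta> \<alpha>0(1) \<beta>0(1) by blast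
  qed
qed

section \<open>The degree filtration of a bijective skew PBW extension\<close>

locale bij_skew_PBW =
  fixes R :: "'a::ring_1 set" and x :: "nat \<Rightarrow> 'a" and n :: nat
  assumes bijective: "bijective_skew_PBW R x n" and domain_R: "domain_on R"
begin

sublocale subring R
  using bijective unfolding bijective_skew_PBW_def skew_PBW_def by unfold_locales blast

abbreviation mon :: "(nat \<Rightarrow> nat) \<Rightarrow> 'a" where
  "mon \<equiv> monom x n"

definition deg :: "(nat \<Rightarrow> nat) \<Rightarrow> nat" where
  "deg \<gamma> = (\<Sum>i<n. \<gamma> i)"

definition exps_lt :: "nat \<Rightarrow> (nat \<Rightarrow> nat) set" where
  "exps_lt k = {\<gamma> \<in> exps n. deg \<gamma> < k}"

definition exps_eq :: "nat \<Rightarrow> (nat \<Rightarrow> nat) set" where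
  "exps_eq k = {\<gamma> \<in> exps n. deg \<gamma> = k}"

definition Fil :: "nat \<Rightarrow> 'a set" where
  "Fil k = left_span R mon (exps_lt k)"

lemma zero_in_Fil [simp]: "0 \<in> Fil k"
  and Fil_add: "z \<in> Fil k \<Longrightarrow> z' \<in> Fil k \<Longrightarrow> z + z' \<in> Fil k"
  and Fil_diff: "z \<in> Fil k \<Longrightarrow> z' \<in> Fil k \<Longrightarrow> z - z' \<in> Fil k"
  and Fil_uminus: "z \<in> Fil k \<Longrightarrow> - z \<in> Fil k"
  and Fil_lmult: "r \<in> R \<Longrightarrow> z \<in> Fil k \<Longrightarrow> r * z \<in> Fil k"
  and Fil_sum: "(\<And>i. i \<in> I \<Longrightarrow> f i \<in> Fil k) \<Longrightarrow> sum f I \<in> Fil k"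
  unfolding Fil_def
  by (simp_all add: left_span_add left_span_diff left_span_uminus left_span_mult left_span_sum)

lemma deg_zero [simp]: "deg 0 = 0"
  and deg_add: "deg (\<alpha> + \<beta>) = deg \<alpha> + deg \<beta>"
  and deg_exp_unit: "i < n \<Longrightarrow> deg (exp_unit i) = 1"
  unfolding deg_def by (simp_all add: sum.distrib exp_unit_def)

lemma deg_eq_0_iff: "\<gamma> \<in> exps n \<Longrightarrow> deg \<gamma> = 0 \<longleftrightarrow> \<gamma> = 0"
  unfolding deg_def exps_def by (auto simp: fun_eq_iff not_less[symmetric])

lemma exp_le_deg: "i < n \<Longrightarrow> \<gamma> i \<le> deg \<gamma>"
  unfolding deg_def by (rule member_le_sum) auto

lemma mon_decompose_lowest:
  assumes "\<gamma> \<in> exps n" "deg \<gamma> \<noteq> 0"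
  obtains j \<gamma>' where "j < n" "\<gamma>' \<in> exps n" "\<gamma> = exp_unit j + \<gamma>'" "deg \<gamma> = Suc (deg \<gamma>')"
    "mon \<gamma> = x j * mon \<gamma>'"
proof -
  obtain j \<gamma>' where "j < n" "\<gamma>' \<in> exps n" "\<gamma> = exp_unit j + \<gamma>'" "\<forall>l<j. \<gamma>' l = 0"
    using exps_decompose_lowest[OF assms(1)] assms by (metis deg_zero)
  moreover from this have "deg \<gamma> = Suc (deg \<gamma>')" "mon \<gamma> = x j * mon \<gamma>'"
    by (simp_all add: deg_add deg_exp_unit monom_exp_unit_add)
  ultimately show ?thesis using that by blast
qed

lemma finite_exps_lt: "finite (exps_lt k)"
  and card_exps_lt: "card (exps_lt k) \<le> k ^ n"
proof -
  let ?r = "\<lambda>\<gamma>. restrict \<gamma> {..<n}"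
  have "inj_on ?r (exps n)"
  proof (rule inj_onI, rule ext)
    fix \<alpha> \<beta> :: "nat \<Rightarrow> nat" and i
    assume "\<alpha> \<in> exps n" "\<beta> \<in> exps n" "?r \<alpha> = ?r \<beta>"
    thus "\<alpha> i = \<beta> i" unfolding exps_def
      by (cases "i < n") (metis lessThan_iff restrict_apply', simp)
  qed
  hence inj: "inj_on ?r (exps_lt k)" unfolding exps_lt_def by (rule inj_on_subset) auto
  have sub: "?r ` exps_lt k \<subseteq> PiE {..<n} (\<lambda>_. {..<k})"
  proof
    fix f assume "f \<in> ?r ` exps_lt k"
    then obtain \<gamma> where \<gamma>: "\<gamma> \<in> exps_lt k" "f = ?r \<gamma>" by blast
    have "\<gamma> i < k" if "i < n" for i
      using exp_le_deg[OF that, of \<gamma>] \<gamma>(1) unfolding exps_lt_def by simp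
    thus "f \<in> PiE {..<n} (\<lambda>_. {..<k})" unfolding \<gamma>(2) by auto
  qed
  have fin: "finite (PiE {..<n} (\<lambda>_. {..<k}))" by (simp add: finite_PiE)
  thus "finite (exps_lt k)" using finite_imageD[OF finite_subset[OF sub] inj] by blast
  show "card (exps_lt k) \<le> k ^ n"
    using card_inj_on_le[OF inj sub fin] by (simp add: card_PiE)
qed

lemma exps_eq_subset: "exps_eq k \<subseteq> exps_lt (Suc k)"
  and exps_lt_Suc: "exps_lt (Suc k) = exps_lt k \<union> exps_eq k"
  and exps_lt_exps_eq_disjoint: "exps_lt k \<inter> exps_eq k = {}"
  unfolding exps_lt_def exps_eq_def by auto

lemma finite_exps_eq: "finite (exps_eq k)"
  using finite_subset[OF exps_eq_subset finite_exps_lt] .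

lemma sum_exps_lt_Suc: "(\<Sum>\<gamma>\<in>exps_lt (Suc k). f \<gamma>) = (\<Sum>\<gamma>\<in>exps_lt k. f \<gamma>) + (\<Sum>\<gamma>\<in>exps_eq k. f \<gamma>)"
  unfolding exps_lt_Suc
  by (rule sum.union_disjoint[OF finite_exps_lt finite_exps_eq exps_lt_exps_eq_disjoint])

lemma skew_PBW: "skew_PBW R x n"
  using bijective unfolding bijective_skew_PBW_def by (rule conjunct1)

lemma free_basis: "free_left_basis R x n"
  using skew_PBW unfolding skew_PBW_def by (rule conjunct1[OF conjunct2])

lemma mon_independent:
  assumes "finite S" "S \<subseteq> exps n"
  shows "left_independent R mon S"
  unfolding left_independent_def
proof (intro allI impI)
  fix c assume "(\<forall>g\<in>S. c g \<in> R) \<and> (\<Sum>g\<in>S. c g * mon g) = 0"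
  thus "\<forall>g\<in>S. c g = 0"
    using conjunct2[OF free_basis[unfolded free_left_basis_def], rule_format, of S c] assms by blast
qed

lemma mon_independent_exps_lt: "left_independent R mon (exps_lt k)"
  using mon_independent[OF finite_exps_lt] unfolding exps_lt_def by blast

lemma Fil_generator: "\<gamma> \<in> exps n \<Longrightarrow> deg \<gamma> < k \<Longrightarrow> r \<in> R \<Longrightarrow> r * mon \<gamma> \<in> Fil k"
  unfolding Fil_def by (rule left_span_generator[OF finite_exps_lt]) (auto simp: exps_lt_def)

lemma mon_in_Fil: "\<gamma> \<in> exps n \<Longrightarrow> deg \<gamma> < k \<Longrightarrow> mon \<gamma> \<in> Fil k"
  using Fil_generator[of \<gamma> k 1] by simp

lemma Fil_mono: "k \<le> l \<Longrightarrow> Fil k \<subseteq> Fil l"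
  unfolding Fil_def by (rule left_span_mono[OF finite_exps_lt]) (auto simp: exps_lt_def)

lemma Fil_0: "Fil 0 = {0}"
proof -
  have "exps_lt 0 = {}" unfolding exps_lt_def by simp
  thus ?thesis unfolding Fil_def left_span_def by simp
qed

lemma mon_spanning: "\<exists>S c. finite S \<and> S \<subseteq> exps n \<and> (\<forall>\<beta>\<in>S. c \<beta> \<in> R) \<and> a = (\<Sum>\<beta>\<in>S. c \<beta> * mon \<beta>)"
  using free_basis unfolding free_left_basis_def by (rule conjunct1[THEN spec])

lemma exists_Fil: "\<exists>k. a \<in> Fil k"
proof -
  obtain S c where S: "finite S" "S \<subseteq> exps n" "\<forall>\<beta>\<in>S. c \<beta> \<in> R" "a = (\<Sum>\<beta>\<in>S. c \<beta> * mon \<beta>)"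
    using mon_spanning[of a] by blast
  define k where "k = Suc (Max (deg ` S))"
  have "deg \<beta> < k" if "\<beta> \<in> S" for \<beta>
    unfolding k_def using Max_ge[OF finite_imageI[OF S(1)] imageI[OF that]]
      by (rule le_imp_less_Suc)
  hence "c \<beta> * mon \<beta> \<in> Fil k" if "\<beta> \<in> S" for \<beta>
    using S(2,3) that by (intro Fil_generator) auto
  hence "a \<in> Fil k" unfolding S(4) by (rule Fil_sum)
  thus ?thesis ..
qed

lemma one_neq_zero: "(1::'a) \<noteq> 0"
  using domain_R unfolding domain_on_def by blast

lemma mult_neq_zero: "a \<in> R \<Longrightarrow> b \<in> R \<Longrightarrow> a \<noteq> 0 \<Longrightarrow> b \<noteq> 0 \<Longrightarrow> a * b \<noteq> 0"
  using domain_R unfolding domain_on_def by blast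

definition sigma :: "nat \<Rightarrow> 'a \<Rightarrow> 'a" where
  "sigma i = (SOME \<sigma>. bij_betw \<sigma> R R \<and> (\<forall>r\<in>R. x i * r - \<sigma> r * x i \<in> R))"

lemma sigma:
  assumes "i < n"
  shows sigma_bij: "bij_betw (sigma i) R R"
    and sigma_commute: "r \<in> R \<Longrightarrow> x i * r - sigma i r * x i \<in> R"
proof -
  have "\<exists>\<sigma>. bij_betw \<sigma> R R \<and> (\<forall>r\<in>R. x i * r - \<sigma> r * x i \<in> R)"
    using bijective assms unfolding bijective_skew_PBW_def by blast
  hence "bij_betw (sigma i) R R \<and> (\<forall>r\<in>R. x i * r - sigma i r * x i \<in> R)"
    unfolding sigma_def by (rule someI_ex)
  thus "bij_betw (sigma i) R R" "r \<in> R \<Longrightarrow> x i * r - sigma i r * x i \<in> R" by blast+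
qed

lemma sigma_closed: "i < n \<Longrightarrow> r \<in> R \<Longrightarrow> sigma i r \<in> R"
  using sigma_bij bij_betwE by blast

lemma sigma_zero:
  assumes i: "i < n"
  shows "sigma i 0 = 0"
proof -
  define t where "t = x i * 0 - sigma i 0 * x i"
  have t: "t \<in> R" unfolding t_def using sigma_commute[OF i zero_closed] .
  have unit: "exp_unit i \<noteq> 0" by (simp add: exp_unit_def fun_eq_iff)
  define c where "c \<gamma> = (if \<gamma> = exp_unit i then sigma i 0 else t)" for \<gamma>
  have sum: "(\<Sum>\<gamma>\<in>{exp_unit i, 0}. c \<gamma> * mon \<gamma>) = 0"
    using unit by (simp add: c_def monom_exp_unit[OF i] t_def)
  have indep: "left_independent R mon {exp_unit i, 0}"
    using i by (intro mon_independent) (auto intro: exp_unit_in_exps)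
  have "c (exp_unit i) = 0"
    by (rule left_independentD[OF indep _ sum]) (auto simp: c_def t sigma_closed[OF i])
  thus ?thesis by (simp add: c_def)
qed

lemma sigma_neq_zero:
  assumes i: "i < n" and r: "r \<in> R" "r \<noteq> 0"
  shows "sigma i r \<noteq> 0"
proof
  assume "sigma i r = 0"
  have "inj_on (sigma i) R" using sigma_bij[OF i] by (rule bij_betw_imp_inj_on)
  moreover have "sigma i r = sigma i 0" using sigma_zero[OF i] \<open>sigma i r = 0\<close> by simp
  ultimately have "r = 0" using r(1) zero_closed by (rule inj_onD)
  with r(2) show False ..
qed

lemma commutation:
  assumes "i < n" "j < n"
  shows "\<exists>c\<in>R. c \<noteq> 0 \<and> x i * x j - c * x j * x i \<in> lin_span R x n"
proof -
  have "\<forall>i<n. \<forall>j<n. \<exists>c\<in>R. c \<noteq> 0 \<and> x j * x i - c * x i * x j \<in> lin_span R x n"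
    using skew_PBW unfolding skew_PBW_def by (elim conjE)
  from this[rule_format, OF assms(2,1)] show ?thesis .
qed

lemma x_mult_Fil_of_mon:
  assumes mon: "\<And>\<gamma> j. \<gamma> \<in> exps_lt k \<Longrightarrow> j < n \<Longrightarrow> x j * mon \<gamma> \<in> Fil (Suc k)"
    and i: "i < n" and z: "z \<in> Fil k"
  shows "x i * z \<in> Fil (Suc k)"
proof -
  obtain c where c: "\<And>\<gamma>. \<gamma> \<in> exps_lt k \<Longrightarrow> c \<gamma> \<in> R" and z_eq: "z = (\<Sum>\<gamma>\<in>exps_lt k. c \<gamma> * mon \<gamma>)"
    using z unfolding Fil_def left_span_def by blast
  have "x i * (c \<gamma> * mon \<gamma>) \<in> Fil (Suc k)" if \<gamma>: "\<gamma> \<in> exps_lt k" for \<gamma>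
  proof -
    have "x i * (c \<gamma> * mon \<gamma>) =
        (x i * c \<gamma> - sigma i (c \<gamma>) * x i) * mon \<gamma> + sigma i (c \<gamma>) * (x i * mon \<gamma>)"
      by (simp add: algebra_simps)
    moreover have "(x i * c \<gamma> - sigma i (c \<gamma>) * x i) * mon \<gamma> \<in> Fil (Suc k)"
      using \<gamma> sigma_commute[OF i c[OF \<gamma>]] by (intro Fil_generator) (auto simp: exps_lt_def)
    moreover have "sigma i (c \<gamma>) * (x i * mon \<gamma>) \<in> Fil (Suc k)"
      using sigma_closed[OF i c[OF \<gamma>]] mon[OF \<gamma> i] by (rule Fil_lmult)
    ultimately show ?thesis by (simp add: Fil_add)
  qed
  hence "(\<Sum>\<gamma>\<in>exps_lt k. x i * (c \<gamma> * mon \<gamma>)) \<in> Fil (Suc k)" by (rule Fil_sum)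
  thus ?thesis unfolding z_eq by (simp add: sum_distrib_left)
qed

lemma lin_span_mult_mon_Fil:
  assumes mon: "\<And>\<gamma> j. \<gamma> \<in> exps_lt k \<Longrightarrow> j < n \<Longrightarrow> x j * mon \<gamma> \<in> Fil (Suc k)"
    and l: "l \<in> lin_span R x n" and \<gamma>: "\<gamma> \<in> exps_lt k"
  shows "l * mon \<gamma> \<in> Fil (Suc k)"
proof -
  obtain r0 r where l_eq: "l = r0 + (\<Sum>j<n. r j * x j)" and r: "r0 \<in> R" "\<forall>j<n. r j \<in> R"
    using l unfolding lin_span_def by blast
  have "l * mon \<gamma> = r0 * mon \<gamma> + (\<Sum>j<n. r j * (x j * mon \<gamma>))"
    unfolding l_eq by (simp add: distrib_right sum_distrib_right mult.assoc)
  moreover have "r0 * mon \<gamma> \<in> Fil (Suc k)"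
    using \<gamma> r(1) by (intro Fil_generator) (auto simp: exps_lt_def)
  moreover have "r j * (x j * mon \<gamma>) \<in> Fil (Suc k)" if "j \<in> {..<n}" for j
  proof -
    have "r j \<in> R" "x j * mon \<gamma> \<in> Fil (Suc k)" using r(2) mon[OF \<gamma>] that by auto
    thus ?thesis by (rule Fil_lmult)
  qed
  hence "(\<Sum>j<n. r j * (x j * mon \<gamma>)) \<in> Fil (Suc k)" by (rule Fil_sum)
  ultimately show ?thesis by (simp add: Fil_add)
qed

lemma Fil_of_leading_term:
  assumes "\<gamma> \<in> exps n" "i < n" "c \<in> R"
    and lead: "x i * mon \<gamma> - c * mon (exp_unit i + \<gamma>) \<in> Fil (Suc (deg \<gamma>))"
  shows "x i * mon \<gamma> \<in> Fil (Suc (Suc (deg \<gamma>)))"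
proof -
  have "c * mon (exp_unit i + \<gamma>) \<in> Fil (Suc (Suc (deg \<gamma>)))"
    using assms
      by (intro Fil_generator) (auto simp: add_in_exps exp_unit_in_exps deg_add deg_exp_unit)
  moreover have "x i * mon \<gamma> - c * mon (exp_unit i + \<gamma>) \<in> Fil (Suc (Suc (deg \<gamma>)))"
    using lead Fil_mono[of "Suc (deg \<gamma>)" "Suc (Suc (deg \<gamma>))"] by auto
  ultimately have "(x i * mon \<gamma> - c * mon (exp_unit i + \<gamma>)) + c * mon (exp_unit i + \<gamma>)
      \<in> Fil (Suc (Suc (deg \<gamma>)))" by (intro Fil_add)
  thus ?thesis by simp
qed

lemma x_mult_mon_commute:
  assumes lower: "\<And>\<gamma> i'. \<gamma> \<in> exps_lt (Suc (deg \<beta>)) \<Longrightarrow> i' < n \<Longrightarrow>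
      x i' * mon \<gamma> \<in> Fil (Suc (Suc (deg \<beta>)))"
    and i: "i < n" and "j < i" and \<beta>: "\<beta> \<in> exps n" "\<forall>l<j. \<beta> l = 0"
    and c2: "c2 \<in> R" "c2 \<noteq> 0" and m: "x i * mon \<beta> - c2 * mon (exp_unit i + \<beta>) \<in> Fil (Suc (deg \<beta>))"
  shows "\<exists>c\<in>R. c \<noteq> 0 \<and>
    x i * mon (exp_unit j + \<beta>) - c * mon (exp_unit i + (exp_unit j + \<beta>)) \<in> Fil (Suc (Suc (deg \<beta>)))"
proof -
  have j: "j < n" using \<open>j < i\<close> i by simp
  obtain c1 where c1: "c1 \<in> R" "c1 \<noteq> 0" and l: "x i * x j - c1 * x j * x i \<in> lin_span R x n"
    using commutation[OF i j] by blast
  define \<gamma> where "\<gamma> = exp_unit i + \<beta>"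
  have \<gamma>: "\<gamma> \<in> exps n" "deg \<gamma> = Suc (deg \<beta>)" "\<forall>l<j. \<gamma> l = 0"
    unfolding \<gamma>_def using i \<beta> \<open>j < i\<close>
    by (auto simp: add_in_exps exp_unit_in_exps deg_add deg_exp_unit exp_unit_def)
  have "exp_unit i + (exp_unit j + \<beta>) = exp_unit j + \<gamma>" unfolding \<gamma>_def by (simp add: add_ac)
  hence mon_target: "mon (exp_unit i + (exp_unit j + \<beta>)) = x j * mon \<gamma>"
    using monom_exp_unit_add[OF j \<gamma>(3)] by simp
  define \<delta> where "\<delta> = x j * c2 - sigma j c2 * x j"
  have "x i * mon (exp_unit j + \<beta>) - (c1 * sigma j c2) * mon (exp_unit i + (exp_unit j + \<beta>)) =
      (x i * x j - c1 * x j * x i) * mon \<beta> + c1 * (\<delta> * mon \<gamma>)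
        + c1 * (x j * (x i * mon \<beta> - c2 * mon \<gamma>))"
    unfolding monom_exp_unit_add[OF j \<beta>(2)] mon_target \<delta>_def by (simp add: algebra_simps)
  also have "\<dots> \<in> Fil (Suc (Suc (deg \<beta>)))"
  proof -
    have "(x i * x j - c1 * x j * x i) * mon \<beta> \<in> Fil (Suc (Suc (deg \<beta>)))"
      using \<beta>(1) by (intro lin_span_mult_mon_Fil[OF lower l]) (auto simp: exps_lt_def)
    moreover have "\<delta> * mon \<gamma> \<in> Fil (Suc (Suc (deg \<beta>)))"
      using sigma_commute[OF j c2(1)] \<gamma> unfolding \<delta>_def by (intro Fil_generator) auto
    moreover have "x j * (x i * mon \<beta> - c2 * mon \<gamma>) \<in> Fil (Suc (Suc (deg \<beta>)))"
      using m unfolding \<gamma>_def by (intro x_mult_Fil_of_mon[OF lower j])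
    ultimately show ?thesis by (intro Fil_add Fil_lmult[OF c1(1)])
  qed
  finally show ?thesis
    using mult_closed[OF c1(1) sigma_closed[OF j c2(1)]]
      mult_neq_zero[OF c1(1) sigma_closed[OF j c2(1)] c1(2) sigma_neq_zero[OF j c2(1,2)]]
    by blast
qed

text \<open>If \<open>x\<^sub>i\<close> is not already in order, commute it past the lowest variable \<open>x\<^sub>j\<close> of
  \<open>x\<^sup>\<beta>\<close> and induct on the degree.\<close>

lemma x_mult_mon:
  assumes "\<beta> \<in> exps n" "i < n"
  shows "\<exists>c\<in>R. c \<noteq> 0 \<and> x i * mon \<beta> - c * mon (exp_unit i + \<beta>) \<in> Fil (Suc (deg \<beta>))"
  using assms
proof (induction "deg \<beta>" arbitrary: \<beta> i rule: less_induct)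
  case less
  note \<beta> = less.prems(1) and i = less.prems(2)
  show ?case
  proof (cases "\<forall>l<i. \<beta> l = 0")
    case True
    hence "x i * mon \<beta> - 1 * mon (exp_unit i + \<beta>) = 0"
      using monom_exp_unit_add[OF i True, where x = x] by simp
    thus ?thesis using one_neq_zero by (intro bexI[of _ 1]) auto
  next
    case False
    hence "\<beta> \<noteq> 0" by auto
    then obtain j \<beta>' where j: "j < n" and \<beta>': "\<beta>' \<in> exps n" "\<beta> = exp_unit j + \<beta>'" "\<forall>l<j. \<beta>' l = 0"
      using exps_decompose_lowest[OF \<beta>] by metis
    have "j < i"
    proof (rule ccontr)
      assume "\<not> j < i"
      hence "\<forall>l<i. \<beta> l = 0" using \<beta>'(2,3) by (simp add: exp_unit_def)
      thus False using False by blast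
    qed
    have deg_\<beta>: "deg \<beta> = Suc (deg \<beta>')" using \<beta>'(2) j by (simp add: deg_add deg_exp_unit)
    have lower: "x i' * mon \<gamma> \<in> Fil (Suc (Suc (deg \<beta>')))"
      if \<gamma>: "\<gamma> \<in> exps_lt (Suc (deg \<beta>'))" and i': "i' < n" for \<gamma> i'
    proof -
      have \<gamma>': "\<gamma> \<in> exps n" "deg \<gamma> \<le> deg \<beta>'" using \<gamma> unfolding exps_lt_def by auto
      obtain c where "c \<in> R" "x i' * mon \<gamma> - c * mon (exp_unit i' + \<gamma>) \<in> Fil (Suc (deg \<gamma>))"
        using less.hyps[of \<gamma> i'] \<gamma>' deg_\<beta> i' by auto
      hence "x i' * mon \<gamma> \<in> Fil (Suc (Suc (deg \<gamma>)))" using \<gamma>'(1) i' by (intro Fil_of_leading_term)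
      thus ?thesis using Fil_mono[of "Suc (Suc (deg \<gamma>))" "Suc (Suc (deg \<beta>'))"] \<gamma>'(2) by auto
    qed
    obtain c2 where "c2 \<in> R" "c2 \<noteq> 0"
      "x i * mon \<beta>' - c2 * mon (exp_unit i + \<beta>') \<in> Fil (Suc (deg \<beta>'))"
      using less.hyps[of \<beta>' i] \<beta>'(1) i deg_\<beta> by auto
    from x_mult_mon_commute[OF lower i \<open>j < i\<close> \<beta>'(1,3) this]
    show ?thesis unfolding \<beta>'(2)[symmetric] deg_\<beta> .
  qed
qed

lemma x_mult_Fil: "i < n \<Longrightarrow> z \<in> Fil k \<Longrightarrow> x i * z \<in> Fil (Suc k)"
proof (rule x_mult_Fil_of_mon)
  fix \<gamma> j assume \<gamma>: "\<gamma> \<in> exps_lt k" and j: "j < n"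
  hence \<gamma>': "\<gamma> \<in> exps n" "deg \<gamma> < k" unfolding exps_lt_def by auto
  obtain c where "c \<in> R" "x j * mon \<gamma> - c * mon (exp_unit j + \<gamma>) \<in> Fil (Suc (deg \<gamma>))"
    using x_mult_mon[OF \<gamma>'(1) j] by blast
  hence "x j * mon \<gamma> \<in> Fil (Suc (Suc (deg \<gamma>)))" using \<gamma>'(1) j by (intro Fil_of_leading_term)
  thus "x j * mon \<gamma> \<in> Fil (Suc k)" using Fil_mono[of "Suc (Suc (deg \<gamma>))" "Suc k"] \<gamma>'(2) by auto
qed

lemma mon_mult_Fil: "\<alpha> \<in> exps n \<Longrightarrow> z \<in> Fil k \<Longrightarrow> mon \<alpha> * z \<in> Fil (deg \<alpha> + k)"
proof (induction "deg \<alpha>" arbitrary: \<alpha> rule: less_induct)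
  case less
  show ?case
  proof (cases "deg \<alpha> = 0")
    case True
    thus ?thesis using less.prems deg_eq_0_iff by simp
  next
    case False
    then obtain j \<alpha>' where "j < n" "\<alpha>' \<in> exps n" "deg \<alpha> = Suc (deg \<alpha>')" "mon \<alpha> = x j * mon \<alpha>'"
      using mon_decompose_lowest[OF less.prems(1)] by metis
    thus ?thesis using less.hyps[of \<alpha>'] less.prems(2) x_mult_Fil by (simp add: mult.assoc)
  qed
qed

lemma Fil_mult: "a \<in> Fil k \<Longrightarrow> b \<in> Fil l \<Longrightarrow> a * b \<in> Fil (k + l - 1)"
proof -
  assume a: "a \<in> Fil k" and b: "b \<in> Fil l"
  obtain c where c: "\<And>\<gamma>. \<gamma> \<in> exps_lt k \<Longrightarrow> c \<gamma> \<in> R" and a_eq: "a = (\<Sum>\<gamma>\<in>exps_lt k. c \<gamma> * mon \<gamma>)"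
    using a unfolding Fil_def left_span_def by blast
  have "c \<gamma> * (mon \<gamma> * b) \<in> Fil (k + l - 1)" if \<gamma>: "\<gamma> \<in> exps_lt k" for \<gamma>
  proof -
    have "mon \<gamma> * b \<in> Fil (deg \<gamma> + l)" using \<gamma> b unfolding exps_lt_def by (intro mon_mult_Fil) auto
    moreover have "deg \<gamma> + l \<le> k + l - 1" using \<gamma> unfolding exps_lt_def by auto
    ultimately show ?thesis using c[OF \<gamma>] Fil_mono by (blast intro: Fil_lmult)
  qed
  hence "(\<Sum>\<gamma>\<in>exps_lt k. c \<gamma> * (mon \<gamma> * b)) \<in> Fil (k + l - 1)" by (rule Fil_sum)
  thus ?thesis unfolding a_eq by (simp add: sum_distrib_right mult.assoc)
qed

lemma exists_twist:
  assumes "\<alpha> \<in> exps n"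
  shows "\<exists>\<tau>. bij_betw \<tau> R R \<and> \<tau> 0 = 0 \<and> (\<forall>s\<in>R. mon \<alpha> * s - \<tau> s * mon \<alpha> \<in> Fil (deg \<alpha>))"
  using assms
proof (induction "deg \<alpha>" arbitrary: \<alpha> rule: less_induct)
  case less
  show ?case
  proof (cases "deg \<alpha> = 0")
    case True
    hence "\<alpha> = 0" using deg_eq_0_iff less.prems by blast
    thus ?thesis by (intro exI[of _ id]) simp
  next
    case False
    then obtain j \<alpha>' where j: "j < n" "\<alpha>' \<in> exps n" "deg \<alpha> = Suc (deg \<alpha>')" "mon \<alpha> = x j * mon \<alpha>'"
      using mon_decompose_lowest[OF less.prems] by metis
    obtain \<tau> where \<tau>: "bij_betw \<tau> R R" "\<tau> 0 = 0" "\<forall>s\<in>R. mon \<alpha>' * s - \<tau> s * mon \<alpha>' \<in> Fil (deg \<alpha>')"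
      using less.hyps[of \<alpha>'] j(2,3) by auto
    show ?thesis
    proof (intro exI conjI ballI)
      show "bij_betw (sigma j \<circ> \<tau>) R R" using \<tau>(1) sigma_bij[OF j(1)] by (rule bij_betw_trans)
      show "(sigma j \<circ> \<tau>) 0 = 0" using \<tau>(2) sigma_zero[OF j(1)] by simp
      fix s assume s: "s \<in> R"
      have \<tau>s: "\<tau> s \<in> R" using \<tau>(1) s bij_betwE by blast
      have "mon \<alpha> * s - (sigma j \<circ> \<tau>) s * mon \<alpha> =
          (x j * \<tau> s - sigma j (\<tau> s) * x j) * mon \<alpha>' + x j * (mon \<alpha>' * s - \<tau> s * mon \<alpha>')"
        unfolding j(4) by (simp add: algebra_simps)
      also have "\<dots> \<in> Fil (deg \<alpha>)"
      proof (rule Fil_add)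
        show "(x j * \<tau> s - sigma j (\<tau> s) * x j) * mon \<alpha>' \<in> Fil (deg \<alpha>)"
          using sigma_commute[OF j(1) \<tau>s] j(2,3) by (intro Fil_generator) auto
        show "x j * (mon \<alpha>' * s - \<tau> s * mon \<alpha>') \<in> Fil (deg \<alpha>)"
          unfolding j(3) using \<tau>(3) s by (intro x_mult_Fil j(1)) blast
      qed
      finally show "mon \<alpha> * s - (sigma j \<circ> \<tau>) s * mon \<alpha> \<in> Fil (deg \<alpha>)" .
    qed
  qed
qed

definition twist :: "(nat \<Rightarrow> nat) \<Rightarrow> 'a \<Rightarrow> 'a" where
  "twist \<alpha> = (SOME \<tau>. bij_betw \<tau> R R \<and> \<tau> 0 = 0 \<and> (\<forall>s\<in>R. mon \<alpha> * s - \<tau> s * mon \<alpha> \<in> Fil (deg \<alpha>)))"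

lemma twist:
  assumes "\<alpha> \<in> exps n"
  shows twist_bij: "bij_betw (twist \<alpha>) R R"
    and twist_zero: "twist \<alpha> 0 = 0"
    and twist_commute: "s \<in> R \<Longrightarrow> mon \<alpha> * s - twist \<alpha> s * mon \<alpha> \<in> Fil (deg \<alpha>)"
proof -
  have "bij_betw (twist \<alpha>) R R \<and> twist \<alpha> 0 = 0 \<and>
      (\<forall>s\<in>R. mon \<alpha> * s - twist \<alpha> s * mon \<alpha> \<in> Fil (deg \<alpha>))"
    unfolding twist_def using exists_twist[OF assms] by (rule someI_ex)
  thus "bij_betw (twist \<alpha>) R R" "twist \<alpha> 0 = 0"
    "s \<in> R \<Longrightarrow> mon \<alpha> * s - twist \<alpha> s * mon \<alpha> \<in> Fil (deg \<alpha>)" by blast+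
qed

lemma twist_closed: "\<alpha> \<in> exps n \<Longrightarrow> s \<in> R \<Longrightarrow> twist \<alpha> s \<in> R"
  using twist_bij bij_betwE by blast

lemma twist_eq_zero_iff:
  assumes "\<alpha> \<in> exps n" "s \<in> R"
  shows "twist \<alpha> s = 0 \<longleftrightarrow> s = 0"
proof
  assume "twist \<alpha> s = 0"
  hence "twist \<alpha> s = twist \<alpha> 0" using twist_zero[OF assms(1)] by simp
  with bij_betw_imp_inj_on[OF twist_bij[OF assms(1)]] show "s = 0"
    using assms(2) zero_closed by (blast dest: inj_onD)
qed (use twist_zero[OF assms(1)] in simp)

lemma mon_mult_mon:
  assumes "\<alpha> \<in> exps n" "\<beta> \<in> exps n"
  shows "\<exists>c\<in>R. c \<noteq> 0 \<and> mon \<alpha> * mon \<beta> - c * mon (\<alpha> + \<beta>) \<in> Fil (deg \<alpha> + deg \<beta>)"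
  using assms
proof (induction "deg \<alpha>" arbitrary: \<alpha> rule: less_induct)
  case less
  note \<beta> = less.prems(2)
  show ?case
  proof (cases "deg \<alpha> = 0")
    case True
    hence "\<alpha> = 0" using deg_eq_0_iff less.prems(1) by blast
    thus ?thesis using one_neq_zero by (intro bexI[of _ 1]) simp_all
  next
    case False
    then obtain j \<alpha>' where j: "j < n" "\<alpha>' \<in> exps n" "\<alpha> = exp_unit j + \<alpha>'" "deg \<alpha> = Suc (deg \<alpha>')"
      "mon \<alpha> = x j * mon \<alpha>'"
      using mon_decompose_lowest[OF less.prems(1)] by metis
    define \<gamma> where "\<gamma> = \<alpha>' + \<beta>"
    have \<gamma>: "\<gamma> \<in> exps n" "deg \<gamma> = deg \<alpha>' + deg \<beta>" "exp_unit j + \<gamma> = \<alpha> + \<beta>"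
      unfolding \<gamma>_def j(3) using j(2) \<beta> by (simp_all add: add_in_exps deg_add add.assoc)
    obtain c' where c': "c' \<in> R" "c' \<noteq> 0" and m: "mon \<alpha>' * mon \<beta> - c' * mon \<gamma> \<in> Fil (deg \<gamma>)"
      using less.hyps[of \<alpha>'] j(2,4) \<beta> \<gamma>(2) unfolding \<gamma>_def by auto
    obtain c'' where c'': "c'' \<in> R" "c'' \<noteq> 0"
      and m2: "x j * mon \<gamma> - c'' * mon (\<alpha> + \<beta>) \<in> Fil (Suc (deg \<gamma>))"
      using x_mult_mon[OF \<gamma>(1) j(1)] \<gamma>(3) by auto
    have deg_sum: "Suc (deg \<gamma>) = deg \<alpha> + deg \<beta>" using \<gamma>(2) j(4) by simp
    have "mon \<alpha> * mon \<beta> - (sigma j c' * c'') * mon (\<alpha> + \<beta>) =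
        (x j * c' - sigma j c' * x j) * mon \<gamma> + sigma j c' * (x j * mon \<gamma> - c'' * mon (\<alpha> + \<beta>))
          + x j * (mon \<alpha>' * mon \<beta> - c' * mon \<gamma>)"
      unfolding j(5) by (simp add: algebra_simps)
    also have "\<dots> \<in> Fil (deg \<alpha> + deg \<beta>)"
    proof (intro Fil_add)
      show "(x j * c' - sigma j c' * x j) * mon \<gamma> \<in> Fil (deg \<alpha> + deg \<beta>)"
        using sigma_commute[OF j(1) c'(1)] \<gamma>(1) deg_sum by (intro Fil_generator) auto
      show "sigma j c' * (x j * mon \<gamma> - c'' * mon (\<alpha> + \<beta>)) \<in> Fil (deg \<alpha> + deg \<beta>)"
        using sigma_closed[OF j(1) c'(1)] m2 unfolding deg_sum by (rule Fil_lmult)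
      show "x j * (mon \<alpha>' * mon \<beta> - c' * mon \<gamma>) \<in> Fil (deg \<alpha> + deg \<beta>)"
        using x_mult_Fil[OF j(1) m] unfolding deg_sum .
    qed
    finally have "mon \<alpha> * mon \<beta> - (sigma j c' * c'') * mon (\<alpha> + \<beta>) \<in> Fil (deg \<alpha> + deg \<beta>)" .
    moreover have "sigma j c' * c'' \<in> R" using sigma_closed[OF j(1) c'(1)] c''(1)
      by (rule mult_closed)
    moreover have "sigma j c' * c'' \<noteq> 0"
      using mult_neq_zero[OF sigma_closed[OF j(1) c'(1)] c''(1) sigma_neq_zero[OF j(1) c'] c''(2)] .
    ultimately show ?thesis by blast
  qed
qed

lemma term_mult_term:
  assumes \<alpha>: "\<alpha> \<in> exps n" and \<beta>: "\<beta> \<in> exps n" and r: "r \<in> R" "r \<noteq> 0" and s: "s \<in> R" "s \<noteq> 0"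
  shows "\<exists>h\<in>R. h \<noteq> 0 \<and> (r * mon \<alpha>) * (s * mon \<beta>) - h * mon (\<alpha> + \<beta>) \<in> Fil (deg \<alpha> + deg \<beta>)"
proof -
  obtain c where c: "c \<in> R" "c \<noteq> 0" and m2: "mon \<alpha> * mon \<beta> - c * mon (\<alpha> + \<beta>) \<in> Fil (deg \<alpha> + deg \<beta>)"
    using mon_mult_mon[OF \<alpha> \<beta>] by blast
  have m1: "mon \<alpha> * s - twist \<alpha> s * mon \<alpha> \<in> Fil (deg \<alpha>)" by (rule twist_commute[OF \<alpha> s(1)])
  have t: "twist \<alpha> s \<in> R" "twist \<alpha> s \<noteq> 0"
    using twist_closed[OF \<alpha> s(1)] twist_eq_zero_iff[OF \<alpha> s(1)] s(2)
    by auto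
  define h where "h = r * (twist \<alpha> s * c)"
  have "(r * mon \<alpha>) * (s * mon \<beta>) - h * mon (\<alpha> + \<beta>) =
      r * (twist \<alpha> s * (mon \<alpha> * mon \<beta> - c * mon (\<alpha> + \<beta>)))
        + r * ((mon \<alpha> * s - twist \<alpha> s * mon \<alpha>) * mon \<beta>)"
    unfolding h_def by (simp add: algebra_simps)
  also have "\<dots> \<in> Fil (deg \<alpha> + deg \<beta>)"
  proof (intro Fil_add Fil_lmult[OF r(1)])
    show "twist \<alpha> s * (mon \<alpha> * mon \<beta> - c * mon (\<alpha> + \<beta>)) \<in> Fil (deg \<alpha> + deg \<beta>)"
      using t(1) m2 by (rule Fil_lmult)
    have "(mon \<alpha> * s - twist \<alpha> s * mon \<alpha>) * mon \<beta> \<in> Fil (deg \<alpha> + Suc (deg \<beta>) - 1)"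
      using m1 mon_in_Fil[OF \<beta>, of "Suc (deg \<beta>)"] by (intro Fil_mult) auto
    thus "(mon \<alpha> * s - twist \<alpha> s * mon \<alpha>) * mon \<beta> \<in> Fil (deg \<alpha> + deg \<beta>)" by simp
  qed
  finally show ?thesis
    using mult_closed[OF r(1) mult_closed[OF t(1) c(1)]]
      mult_neq_zero[OF r(1) mult_closed[OF t(1) c(1)] r(2) mult_neq_zero[OF t(1) c(1) t(2) c(2)]]
    unfolding h_def by blast
qed

section \<open>Leading terms: the extension is a domain\<close>

lemma Fil_Suc_decompose:
  assumes "a \<in> Fil (Suc d)"
  obtains f where "\<And>\<gamma>. \<gamma> \<in> exps_eq d \<Longrightarrow> f \<gamma> \<in> R" "a - (\<Sum>\<gamma>\<in>exps_eq d. f \<gamma> * mon \<gamma>) \<in> Fil d"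
proof -
  obtain c where c: "\<And>\<gamma>. \<gamma> \<in> exps_lt (Suc d) \<Longrightarrow> c \<gamma> \<in> R"
    and a_eq: "a = (\<Sum>\<gamma>\<in>exps_lt (Suc d). c \<gamma> * mon \<gamma>)"
    using assms unfolding Fil_def left_span_def by blast
  have "a - (\<Sum>\<gamma>\<in>exps_eq d. c \<gamma> * mon \<gamma>) = (\<Sum>\<gamma>\<in>exps_lt d. c \<gamma> * mon \<gamma>)"
    unfolding a_eq sum_exps_lt_Suc by simp
  also have "\<dots> \<in> Fil d" unfolding Fil_def using c exps_lt_Suc by (intro left_spanI) blast
  finally show ?thesis using c exps_lt_Suc by (intro that) blast+
qed

lemma top_coeffs_eq_zero:
  assumes f: "\<And>\<gamma>. \<gamma> \<in> exps_eq d \<Longrightarrow> f \<gamma> \<in> R" and low: "(\<Sum>\<gamma>\<in>exps_eq d. f \<gamma> * mon \<gamma>) \<in> Fil d"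
    and \<gamma>0: "\<gamma>0 \<in> exps_eq d"
  shows "f \<gamma>0 = 0"
proof -
  obtain g where g: "\<And>\<gamma>. \<gamma> \<in> exps_lt d \<Longrightarrow> g \<gamma> \<in> R"
    and eq: "(\<Sum>\<gamma>\<in>exps_eq d. f \<gamma> * mon \<gamma>) = (\<Sum>\<gamma>\<in>exps_lt d. g \<gamma> * mon \<gamma>)"
    using low unfolding Fil_def left_span_def by blast
  define c where "c \<gamma> = (if \<gamma> \<in> exps_eq d then f \<gamma> else - g \<gamma>)" for \<gamma>
  have "(\<Sum>\<gamma>\<in>exps_lt d. c \<gamma> * mon \<gamma>) = (\<Sum>\<gamma>\<in>exps_lt d. - (g \<gamma> * mon \<gamma>))"
    using exps_lt_exps_eq_disjoint unfolding c_def by (intro sum.cong) auto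
  moreover have "(\<Sum>\<gamma>\<in>exps_eq d. c \<gamma> * mon \<gamma>) = (\<Sum>\<gamma>\<in>exps_eq d. f \<gamma> * mon \<gamma>)"
    unfolding c_def by (intro sum.cong) auto
  ultimately have sum0: "(\<Sum>\<gamma>\<in>exps_lt (Suc d). c \<gamma> * mon \<gamma>) = 0"
    unfolding sum_exps_lt_Suc using eq by (simp add: sum_negf)
  have cR: "c \<gamma> \<in> R" if "\<gamma> \<in> exps_lt (Suc d)" for \<gamma>
    using that f g unfolding c_def exps_lt_Suc by (auto intro: uminus_closed)
  have "\<gamma>0 \<in> exps_lt (Suc d)" using \<gamma>0 exps_eq_subset[of d] by (rule subsetD[rotated])
  hence "c \<gamma>0 = 0" using left_independentD[OF mon_independent_exps_lt cR sum0] by blast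
  thus ?thesis using \<gamma>0 by (simp add: c_def)
qed

lemma exists_exact_Fil:
  assumes "a \<noteq> 0"
  obtains d where "a \<in> Fil (Suc d)" "a \<notin> Fil d"
proof -
  define k where "k = (LEAST k. a \<in> Fil k)"
  have a: "a \<in> Fil k" unfolding k_def using exists_Fil by (rule LeastI_ex)
  have "k \<noteq> 0"
  proof
    assume "k = 0"
    with a have "a \<in> Fil 0" by simp
    with assms show False unfolding Fil_0 by simp
  qed
  then obtain d where k: "k = Suc d" using not0_implies_Suc by blast
  have "d < (LEAST k. a \<in> Fil k)" using k unfolding k_def by simp
  hence "a \<notin> Fil d" by (rule not_less_Least)
  with a k show ?thesis using that by blast
qed

lemma grouped_top_coeff_eq_zero:
  assumes fin: "finite P" and v: "v ` P \<subseteq> exps_eq k" and h: "\<And>p. p \<in> P \<Longrightarrow> h p \<in> R"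
    and low: "(\<Sum>p\<in>P. h p * mon (v p)) \<in> Fil k" and \<gamma>: "\<gamma> \<in> exps_eq k"
  shows "(\<Sum>p\<in>{p \<in> P. v p = \<gamma>}. h p) = 0"
proof -
  define F where "F \<gamma> = (\<Sum>p\<in>{p \<in> P. v p = \<gamma>}. h p)" for \<gamma>
  have "(\<Sum>\<gamma>\<in>exps_eq k. F \<gamma> * mon \<gamma>) = (\<Sum>p\<in>P. h p * mon (v p))"
    unfolding F_def sum_distrib_right
    by (subst sum.group[OF fin finite_exps_eq v, symmetric]) (auto intro!: sum.cong)
  with low have "(\<Sum>\<gamma>\<in>exps_eq k. F \<gamma> * mon \<gamma>) \<in> Fil k" by simp
  moreover have "F \<gamma> \<in> R" for \<gamma> unfolding F_def using h by (intro sum_closed) blast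
  ultimately have "F \<gamma> = 0" using \<gamma> by (intro top_coeffs_eq_zero)
  thus ?thesis unfolding F_def .
qed

text \<open>Order each of the two top-degree parts so that the product of their extremal monomials
  cannot be cancelled: its coefficient is a product of nonzero elements of the domain \<open>R\<close>.\<close>

lemma top_product_not_lower:
  assumes Sa: "finite Sa" "Sa \<subseteq> exps_eq d" "Sa \<noteq> {}"
    and f: "\<And>\<alpha>. \<alpha> \<in> Sa \<Longrightarrow> f \<alpha> \<in> R \<and> f \<alpha> \<noteq> 0"
    and Sb: "finite Sb" "Sb \<subseteq> exps_eq e" "Sb \<noteq> {}"
    and g: "\<And>\<beta>. \<beta> \<in> Sb \<Longrightarrow> g \<beta> \<in> R \<and> g \<beta> \<noteq> 0"
  shows "(\<Sum>\<alpha>\<in>Sa. f \<alpha> * mon \<alpha>) * (\<Sum>\<beta>\<in>Sb. g \<beta> * mon \<beta>) \<notin> Fil (d + e)"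
proof
  assume low: "(\<Sum>\<alpha>\<in>Sa. f \<alpha> * mon \<alpha>) * (\<Sum>\<beta>\<in>Sb. g \<beta> * mon \<beta>) \<in> Fil (d + e)"
  have exps: "Sa \<subseteq> exps n" "Sb \<subseteq> exps n" using Sa(2) Sb(2) unfolding exps_eq_def by auto
  obtain \<alpha>0 \<beta>0 where \<alpha>0: "\<alpha>0 \<in> Sa" and \<beta>0: "\<beta>0 \<in> Sb"
    and uniq: "\<And>\<alpha> \<beta>. \<alpha> \<in> Sa \<Longrightarrow> \<beta> \<in> Sb \<Longrightarrow> \<alpha> + \<beta> = \<alpha>0 + \<beta>0 \<Longrightarrow> \<alpha> = \<alpha>0 \<and> \<beta> = \<beta>0"
    using exps_extremal_pair[OF Sa(1) Sb(1) exps Sa(3) Sb(3)] by blast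
  define P where "P = Sa \<times> Sb"
  define t where "t p = (f (fst p) * mon (fst p)) * (g (snd p) * mon (snd p))" for p
  have P: "fst p \<in> exps n" "snd p \<in> exps n" "deg (fst p) = d" "deg (snd p) = e" if "p \<in> P" for p
    using that Sa(2) Sb(2) unfolding P_def exps_eq_def by auto
  have "\<exists>h\<in>R. h \<noteq> 0 \<and> t p - h * mon (fst p + snd p) \<in> Fil (d + e)" if "p \<in> P" for p
    using term_mult_term[OF P(1,2)[OF that]] f g that P(3,4)[OF that] unfolding t_def P_def by auto
  then obtain h where h: "\<And>p. p \<in> P \<Longrightarrow>
      h p \<in> R \<and> h p \<noteq> 0 \<and> t p - h p * mon (fst p + snd p) \<in> Fil (d + e)"
    by metis
  have "(\<Sum>p\<in>P. h p * mon (fst p + snd p)) = (\<Sum>p\<in>P. t p) - (\<Sum>p\<in>P. t p - h p * mon (fst p + snd p))"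
    by (simp add: sum_subtractf)
  also have "\<dots> \<in> Fil (d + e)"
  proof (rule Fil_diff)
    have "(\<Sum>\<alpha>\<in>Sa. f \<alpha> * mon \<alpha>) * (\<Sum>\<beta>\<in>Sb. g \<beta> * mon \<beta>) = (\<Sum>p\<in>P. t p)"
      unfolding P_def t_def sum_product sum.cartesian_product by (simp add: case_prod_beta)
    thus "(\<Sum>p\<in>P. t p) \<in> Fil (d + e)" using low by simp
    show "(\<Sum>p\<in>P. t p - h p * mon (fst p + snd p)) \<in> Fil (d + e)" using h by (intro Fil_sum) blast
  qed
  finally have "(\<Sum>p\<in>{p \<in> P. fst p + snd p = \<alpha>0 + \<beta>0}. h p) = 0"
    using P h \<alpha>0 \<beta>0 unfolding P_def
    by (intro grouped_top_coeff_eq_zero) (auto simp: exps_eq_def add_in_exps deg_add Sa(1) Sb(1))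
  moreover have "{p \<in> P. fst p + snd p = \<alpha>0 + \<beta>0} = {(\<alpha>0, \<beta>0)}"
    using uniq \<alpha>0 \<beta>0 unfolding P_def by auto
  moreover have "h (\<alpha>0, \<beta>0) \<noteq> 0" using h \<alpha>0 \<beta>0 unfolding P_def by blast
  ultimately show False by simp
qed

lemma exists_top_part:
  assumes "a \<in> Fil (Suc d)" "a \<notin> Fil d"
  obtains S f where "finite S" "S \<subseteq> exps_eq d" "S \<noteq> {}" "\<And>\<alpha>. \<alpha> \<in> S \<Longrightarrow> f \<alpha> \<in> R \<and> f \<alpha> \<noteq> 0"
    "a - (\<Sum>\<alpha>\<in>S. f \<alpha> * mon \<alpha>) \<in> Fil d"
proof -
  obtain f where f: "\<And>\<gamma>. \<gamma> \<in> exps_eq d \<Longrightarrow> f \<gamma> \<in> R" and low: "a - (\<Sum>\<gamma>\<in>exps_eq d. f \<gamma> * mon \<gamma>) \<in> Fil d"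
    using Fil_Suc_decompose[OF assms(1)] by blast
  define S where "S = {\<gamma> \<in> exps_eq d. f \<gamma> \<noteq> 0}"
  have "(\<Sum>\<gamma>\<in>exps_eq d. f \<gamma> * mon \<gamma>) = (\<Sum>\<alpha>\<in>S. f \<alpha> * mon \<alpha>)"
    unfolding S_def by (rule sum.mono_neutral_right) (auto simp: finite_exps_eq)
  hence low': "a - (\<Sum>\<alpha>\<in>S. f \<alpha> * mon \<alpha>) \<in> Fil d" using low by simp
  moreover have "S \<noteq> {}"
  proof
    assume "S = {}"
    hence "a \<in> Fil d" using low' by simp
    with assms(2) show False by contradiction
  qed
  moreover have "finite S" "S \<subseteq> exps_eq d" unfolding S_def using finite_exps_eq by auto
  ultimately show ?thesis using that f unfolding S_def by blast
qed

theorem domain_on_UNIV: "domain_on (UNIV :: 'a set)"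
  unfolding domain_on_def
proof (intro conjI ballI impI one_neq_zero)
  fix a b :: 'a assume ab: "a * b = 0"
  show "a = 0 \<or> b = 0"
  proof (rule ccontr)
    assume "\<not> (a = 0 \<or> b = 0)"
    then obtain d e where a: "a \<in> Fil (Suc d)" "a \<notin> Fil d" and b: "b \<in> Fil (Suc e)" "b \<notin> Fil e"
      using exists_exact_Fil by metis
    obtain Sa f where Sa: "finite Sa" "Sa \<subseteq> exps_eq d" "Sa \<noteq> {}" "\<And>\<alpha>. \<alpha> \<in> Sa \<Longrightarrow> f \<alpha> \<in> R \<and> f \<alpha> \<noteq> 0"
      and aA: "a - (\<Sum>\<alpha>\<in>Sa. f \<alpha> * mon \<alpha>) \<in> Fil d"
      using exists_top_part[OF a] by blast
    obtain Sb g where Sb: "finite Sb" "Sb \<subseteq> exps_eq e" "Sb \<noteq> {}" "\<And>\<beta>. \<beta> \<in> Sb \<Longrightarrow> g \<beta> \<in> R \<and> g \<beta> \<noteq> 0"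
      and bB: "b - (\<Sum>\<beta>\<in>Sb. g \<beta> * mon \<beta>) \<in> Fil e"
      using exists_top_part[OF b] by blast
    define A where "A = (\<Sum>\<alpha>\<in>Sa. f \<alpha> * mon \<alpha>)"
    define B where "B = (\<Sum>\<beta>\<in>Sb. g \<beta> * mon \<beta>)"
    have "A * B \<notin> Fil (d + e)" unfolding A_def B_def using Sa Sb by (rule top_product_not_lower)
    moreover have "A * B \<in> Fil (d + e)"
    proof -
      have "A \<in> Fil (Suc d)"
        using Fil_diff[OF a(1) Fil_mono[of d "Suc d", THEN subsetD, OF _ aA[folded A_def]]] by simp
      hence "A * (b - B) \<in> Fil (Suc d + e - 1)" using bB unfolding B_def by (intro Fil_mult)
      moreover have "(a - A) * b \<in> Fil (d + Suc e - 1)" using aA b(1) unfolding A_def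
        by (intro Fil_mult)
      ultimately have "a * b - (a - A) * b - A * (b - B) \<in> Fil (d + e)"
        using ab by (intro Fil_diff) simp_all
      thus ?thesis by (simp add: algebra_simps)
    qed
    ultimately show False ..
  qed
qed

section \<open>Right freeness and the Ore property of the extension\<close>

lemma right_span_subset_Fil: "right_span R mon (exps_lt k) \<subseteq> Fil k"
proof
  fix z assume "z \<in> right_span R mon (exps_lt k)"
  then obtain t where t: "\<And>\<gamma>. \<gamma> \<in> exps_lt k \<Longrightarrow> t \<gamma> \<in> R" and z: "z = (\<Sum>\<gamma>\<in>exps_lt k. mon \<gamma> * t \<gamma>)"
    unfolding right_span_def by blast
  have "mon \<gamma> * t \<gamma> \<in> Fil k" if \<gamma>: "\<gamma> \<in> exps_lt k" for \<gamma>
  proof -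
    have \<gamma>': "\<gamma> \<in> exps n" "deg \<gamma> < k" using \<gamma> unfolding exps_lt_def by auto
    have "t \<gamma> * mon 0 \<in> Fil 1" using t[OF \<gamma>] by (intro Fil_generator) auto
    hence "mon \<gamma> * t \<gamma> \<in> Fil (Suc (deg \<gamma>) + 1 - 1)"
      using mon_in_Fil[OF \<gamma>'(1), of "Suc (deg \<gamma>)"] by (intro Fil_mult) simp_all
    thus ?thesis using Fil_mono[of "Suc (deg \<gamma>)" k] \<gamma>'(2) by auto
  qed
  thus "z \<in> Fil k" unfolding z by (rule Fil_sum)
qed

lemma Fil_subset_right_span: "Fil k \<subseteq> right_span R mon (exps_lt k)"
proof (induction k)
  case 0
  have "exps_lt 0 = {}" unfolding exps_lt_def by simp
  thus ?case unfolding Fil_0 right_span_def by simp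
next
  case (Suc k)
  show ?case
  proof
    fix z assume "z \<in> Fil (Suc k)"
    then obtain f where f: "\<And>\<gamma>. \<gamma> \<in> exps_eq k \<Longrightarrow> f \<gamma> \<in> R"
      and low: "z - (\<Sum>\<gamma>\<in>exps_eq k. f \<gamma> * mon \<gamma>) \<in> Fil k"
      using Fil_Suc_decompose by blast
    have \<gamma>E: "\<gamma> \<in> exps n" "deg \<gamma> = k" if "\<gamma> \<in> exps_eq k" for \<gamma>
      using that unfolding exps_eq_def by auto
    \<comment> \<open>Move each top coefficient to the right by inverting the twist of its monomial.\<close>
    define s where "s \<gamma> = inv_into R (twist \<gamma>) (f \<gamma>)" for \<gamma>
    have s: "s \<gamma> \<in> R" "twist \<gamma> (s \<gamma>) = f \<gamma>" if "\<gamma> \<in> exps_eq k" for \<gamma>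
      using bij_betw_inv_into_right[OF twist_bij[OF \<gamma>E(1)[OF that]] f[OF that]]
        inv_into_into[of "f \<gamma>" "twist \<gamma>" R] twist_bij[OF \<gamma>E(1)[OF that]] f[OF that]
      unfolding s_def bij_betw_def by auto
    have "z - (\<Sum>\<gamma>\<in>exps_eq k. mon \<gamma> * s \<gamma>) =
        (z - (\<Sum>\<gamma>\<in>exps_eq k. f \<gamma> * mon \<gamma>)) - (\<Sum>\<gamma>\<in>exps_eq k. mon \<gamma> * s \<gamma> - twist \<gamma> (s \<gamma>) * mon \<gamma>)"
      using s(2) by (simp add: sum_subtractf)
    also have "\<dots> \<in> Fil k"
    proof (rule Fil_diff[OF low Fil_sum])
      fix \<gamma> assume \<gamma>: "\<gamma> \<in> exps_eq k"
      show "mon \<gamma> * s \<gamma> - twist \<gamma> (s \<gamma>) * mon \<gamma> \<in> Fil k"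
        using twist_commute[OF \<gamma>E(1)[OF \<gamma>] s(1)[OF \<gamma>]] \<gamma>E(2)[OF \<gamma>] by simp
    qed
    also have "\<dots> \<subseteq> right_span R mon (exps_lt k)" by (rule Suc.IH)
    finally obtain t where t: "\<And>\<gamma>. \<gamma> \<in> exps_lt k \<Longrightarrow> t \<gamma> \<in> R"
      and z: "z - (\<Sum>\<gamma>\<in>exps_eq k. mon \<gamma> * s \<gamma>) = (\<Sum>\<gamma>\<in>exps_lt k. mon \<gamma> * t \<gamma>)"
      unfolding right_span_def by blast
    define u where "u \<gamma> = (if \<gamma> \<in> exps_lt k then t \<gamma> else s \<gamma>)" for \<gamma>
    have "(\<Sum>\<gamma>\<in>exps_eq k. mon \<gamma> * u \<gamma>) = (\<Sum>\<gamma>\<in>exps_eq k. mon \<gamma> * s \<gamma>)"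
      using exps_lt_exps_eq_disjoint[of k] unfolding u_def by (intro sum.cong) auto
    hence "z = (\<Sum>\<gamma>\<in>exps_lt k. mon \<gamma> * u \<gamma>) + (\<Sum>\<gamma>\<in>exps_eq k. mon \<gamma> * u \<gamma>)"
      using z unfolding u_def by (simp add: diff_eq_eq)
    also have "\<dots> = (\<Sum>\<gamma>\<in>exps_lt (Suc k). mon \<gamma> * u \<gamma>)"
      by (rule sum_exps_lt_Suc[symmetric])
    finally have "z = (\<Sum>\<gamma>\<in>exps_lt (Suc k). mon \<gamma> * u \<gamma>)" .
    moreover have "u \<gamma> \<in> R" if "\<gamma> \<in> exps_lt (Suc k)" for \<gamma>
      using t s(1) that unfolding u_def exps_lt_Suc by auto
    ultimately show "z \<in> right_span R mon (exps_lt (Suc k))"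
      unfolding right_span_def by blast
  qed
qed

lemma Fil_eq_right_span: "Fil k = right_span R mon (exps_lt k)"
  using Fil_subset_right_span right_span_subset_Fil by blast

lemma mon_right_independent_exps_lt: "right_independent R mon (exps_lt k)"
  unfolding right_independent_def
proof (induction k)
  case 0
  show ?case by (simp add: exps_lt_def)
next
  case (Suc k)
  show ?case
  proof (intro allI impI)
    fix t assume "(\<forall>\<gamma>\<in>exps_lt (Suc k). t \<gamma> \<in> R) \<and> (\<Sum>\<gamma>\<in>exps_lt (Suc k). mon \<gamma> * t \<gamma>) = 0"
    hence t: "\<And>\<gamma>. \<gamma> \<in> exps_lt k \<union> exps_eq k \<Longrightarrow> t \<gamma> \<in> R"
      and sum0: "(\<Sum>\<gamma>\<in>exps_lt k. mon \<gamma> * t \<gamma>) + (\<Sum>\<gamma>\<in>exps_eq k. mon \<gamma> * t \<gamma>) = 0"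
      unfolding sum_exps_lt_Suc unfolding exps_lt_Suc by blast+
    have \<gamma>E: "\<gamma> \<in> exps n" "deg \<gamma> = k" if "\<gamma> \<in> exps_eq k" for \<gamma>
      using that unfolding exps_eq_def by auto
    have lower: "(\<Sum>\<gamma>\<in>exps_lt k. mon \<gamma> * t \<gamma>) \<in> Fil k"
      using t unfolding Fil_eq_right_span right_span_def by blast
    have "(\<Sum>\<gamma>\<in>exps_eq k. mon \<gamma> * t \<gamma>) = - (\<Sum>\<gamma>\<in>exps_lt k. mon \<gamma> * t \<gamma>)"
      using sum0 by (simp add: add_eq_0_iff)
    hence "(\<Sum>\<gamma>\<in>exps_eq k. twist \<gamma> (t \<gamma>) * mon \<gamma>) =
        - (\<Sum>\<gamma>\<in>exps_lt k. mon \<gamma> * t \<gamma>) - (\<Sum>\<gamma>\<in>exps_eq k. mon \<gamma> * t \<gamma> - twist \<gamma> (t \<gamma>) * mon \<gamma>)"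
      by (simp add: sum_subtractf)
    also have "\<dots> \<in> Fil k"
    proof (rule Fil_diff[OF Fil_uminus[OF lower] Fil_sum])
      fix \<gamma> assume \<gamma>: "\<gamma> \<in> exps_eq k"
      show "mon \<gamma> * t \<gamma> - twist \<gamma> (t \<gamma>) * mon \<gamma> \<in> Fil k"
        using twist_commute[OF \<gamma>E(1)[OF \<gamma>] t] \<gamma> \<gamma>E(2)[OF \<gamma>] by simp
    qed
    finally have low_top: "(\<Sum>\<gamma>\<in>exps_eq k. twist \<gamma> (t \<gamma>) * mon \<gamma>) \<in> Fil k" .
    have top: "t \<gamma> = 0" if \<gamma>: "\<gamma> \<in> exps_eq k" for \<gamma>
    proof -
      have "twist \<gamma> (t \<gamma>) \<in> R" if "\<gamma> \<in> exps_eq k" for \<gamma>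
        using twist_closed[OF \<gamma>E(1)[OF that] t] that by simp
      hence "twist \<gamma> (t \<gamma>) = 0" using top_coeffs_eq_zero[OF _ low_top \<gamma>] by blast
      thus ?thesis using twist_eq_zero_iff[OF \<gamma>E(1)[OF \<gamma>] t] \<gamma> by simp
    qed
    hence "(\<Sum>\<gamma>\<in>exps_lt k. mon \<gamma> * t \<gamma>) = 0" using sum0 by simp
    moreover have "\<forall>\<gamma>\<in>exps_lt k. t \<gamma> \<in> R" using t by blast
    ultimately have "\<forall>\<gamma>\<in>exps_lt k. t \<gamma> = 0" using spec[OF Suc.IH, of t] by blast
    thus "\<forall>\<gamma>\<in>exps_lt (Suc k). t \<gamma> = 0" using top unfolding exps_lt_Suc by blast
  qed
qed

lemma Fil_Suc_mult: "a \<in> Fil (Suc k) \<Longrightarrow> b \<in> Fil (Suc l) \<Longrightarrow> a * b \<in> Fil (Suc (k + l))"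
  using Fil_mult[of a "Suc k" b "Suc l"] by simp

lemma exists_Fil_Suc: "\<exists>k. a \<in> Fil (Suc k)"
  using exists_Fil Fil_mono[of _ "Suc _"] by (meson le_SucI order_refl subsetD)

lemma exps_lt_Suc_polynomial_growth:
  shows "mono (\<lambda>k. exps_lt (Suc k))" and "exps_lt (Suc 0) \<noteq> {}"
    and "card (exps_lt (Suc k)) \<le> (k + 1) ^ n"
proof -
  show "mono (\<lambda>k. exps_lt (Suc k))" by (rule monoI) (auto simp: exps_lt_def)
  have "0 \<in> exps_lt (Suc 0)" by (simp add: exps_lt_def)
  thus "exps_lt (Suc 0) \<noteq> {}" by blast
  show "card (exps_lt (Suc k)) \<le> (k + 1) ^ n" using card_exps_lt[of "Suc k"] by simp
qed

theorem left_ore_domain_UNIV_if_left_noetherian: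
  assumes "left_noetherian_on R"
  shows "left_ore_domain_on (UNIV :: 'a set)"
proof (rule left_ore_domain_if_polynomial_growth[where e = mon and B = "\<lambda>k. exps_lt (Suc k)"])
  show "left_ore_domain_on R" using domain_R assms by (rule left_ore_domain_if_left_noetherian)
  show "\<exists>k. a \<in> left_span R mon (exps_lt (Suc k))" for a
    using exists_Fil_Suc unfolding Fil_def .
  show "a * b \<in> left_span R mon (exps_lt (Suc (k + l)))"
    if "a \<in> left_span R mon (exps_lt (Suc k))" "b \<in> left_span R mon (exps_lt (Suc l))" for a b k l
    using Fil_Suc_mult that unfolding Fil_def .
qed (use domain_on_UNIV finite_exps_lt exps_lt_Suc_polynomial_growth mon_independent_exps_lt
     in auto)

theorem right_ore_domain_UNIV_if_right_noetherian:
  assumes "right_noetherian_on R"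
  shows "right_ore_domain_on (UNIV :: 'a set)"
proof -
  interpret opp: subring "Opp ` R"
    by unfold_locales (rule subring_of_Opp_image[OF subring])
  have UNIV_opp: "(UNIV :: 'a opp set) = Opp ` UNIV" by (metis opp.collapse surj_def)
  have Fil_opp: "left_span (Opp ` R) (Opp \<circ> mon) (exps_lt k) = Opp ` Fil k" for k
    unfolding left_span_Opp_image Fil_eq_right_span ..
  have "left_ore_domain_on (UNIV :: 'a opp set)"
  proof (rule opp.left_ore_domain_if_polynomial_growth
      [where e = "Opp \<circ> mon" and B = "\<lambda>k. exps_lt (Suc k)"])
    show "left_ore_domain_on (Opp ` R)"
      using domain_R left_noetherian_on_Opp_image[OF assms]
      by (intro opp.left_ore_domain_if_left_noetherian) (simp_all add: domain_on_Opp_image_iff)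
    show "domain_on (UNIV :: 'a opp set)"
      unfolding UNIV_opp domain_on_Opp_image_iff by (rule domain_on_UNIV)
    show "\<exists>k. a \<in> left_span (Opp ` R) (Opp \<circ> mon) (exps_lt (Suc k))" for a
      using exists_Fil_Suc[of "unopp a"] unfolding Fil_opp by (metis image_eqI opp.collapse)
    show "a * b \<in> left_span (Opp ` R) (Opp \<circ> mon) (exps_lt (Suc (k + l)))"
      if "a \<in> left_span (Opp ` R) (Opp \<circ> mon) (exps_lt (Suc k))"
        "b \<in> left_span (Opp ` R) (Opp \<circ> mon) (exps_lt (Suc l))" for a b k l
      using that Fil_Suc_mult[of "unopp b" l "unopp a" k] unfolding Fil_opp
      by (auto simp: add.commute)
    show "left_independent (Opp ` R) (Opp \<circ> mon) (exps_lt (Suc k))" for k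
      by (rule left_independent_Opp_image[OF mon_right_independent_exps_lt])
  qed (use finite_exps_lt exps_lt_Suc_polynomial_growth in auto)
  thus ?thesis unfolding UNIV_opp left_ore_domain_on_Opp_image_iff .
qed

end

theorem proposition3p1:
  fixes R :: "'a::ring_1 set" and x :: "nat \<Rightarrow> 'a" and n :: nat
  assumes "bijective_skew_PBW R x n" and "domain_on R"
  shows "(left_noetherian_on R \<longrightarrow> left_ore_domain_on (UNIV :: 'a set)) \<and>
         (right_noetherian_on R \<longrightarrow> right_ore_domain_on (UNIV :: 'a set))"
proof -
  interpret bij_skew_PBW R x n using assms by unfold_locales
  show ?thesis
    using left_ore_domain_UNIV_if_left_noetherian right_ore_domain_UNIV_if_right_noetherian by blast
qed

end
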